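(* Let $A_1:\mathcal H\to2^{\mathcal H}$ be maximally monotone, $A_2:\mathcal H\to\mathcal H$ single-valued and $L$-Lipschitz continuous, with $A_1+A_2$ maximally monotone; let $B:\mathcal H\to\mathcal H$ be monotone and $\mu$-Lipschitz continuous, and $C:\mathcal H\to\mathcal H$ be $\beta^{-1}$-cocoercive ($\beta>0$), and suppose $\operatorname{zer}(A_1+A_2+B+C)\ne\emptyset$. Let $\gamma>0$ and $\epsilon>0$ satisfy $$1-2\gamma L-2\gamma^2L\mu-\gamma^2\mu^2-\frac{\gamma\beta}{2}\ge\epsilon .$$ Given arbitrary $x_{-1},y_{-1},x_0\in\mathcal H$, define for $k=0,1,2,\dots$ $$y_k=J_{\gamma A_1}\big(x_k-\gamma A_2x_k-\gamma Bx_k-\gamma Cx_k-\gamma(A_2y_{k-1}-A_2x_{k-1})\big),\qquad x_{k+1}=y_k-\gamma By_k+\gamma Bx_k .$$ Then $\{x_k\}$ converges weakly to a point of $\operatorname{zer}(A_1+A_2+B+C)$.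
   Context: $\mathcal H$ is a real Hilbert space. $J_{\gamma A_1}=(\mathrm{Id}+\gamma A_1)^{-1}$ is the resolvent. An operator $T$ is $\beta^{-1}$-cocoercive if $\langle Tx-Ty,x-y\rangle\ge\beta^{-1}\|Tx-Ty\|^2$ for all $x,y$. $\operatorname{zer}(T)=\{x:0\in Tx\}$. *)

theory Defs
  imports "HOL-Analysis.Analysis"
begin

definition monotone_op :: "('a::real_inner \<Rightarrow> 'a set) \<Rightarrow> bool" where
  "monotone_op A \<longleftrightarrow> (\<forall>x y u v. u \<in> A x \<longrightarrow> v \<in> A y \<longrightarrow> inner (u - v) (x - y) \<ge> 0)"

definition max_monotone_op :: "('a::real_inner \<Rightarrow> 'a set) \<Rightarrow> bool" where
  "max_monotone_op A \<longleftrightarrow> monotone_op A \<and>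
     (\<forall>A'. monotone_op A' \<and> (\<forall>x. A x \<subseteq> A' x) \<longrightarrow> A' = A)"

definition sv :: "('a \<Rightarrow> 'a) \<Rightarrow> 'a \<Rightarrow> 'a set" where
  "sv T x = {T x}"

definition op_plus :: "('a::plus \<Rightarrow> 'a set) \<Rightarrow> ('a \<Rightarrow> 'a set) \<Rightarrow> 'a \<Rightarrow> 'a set" where
  "op_plus A B x = {u + v | u v. u \<in> A x \<and> v \<in> B x}"

definition zer :: "('a::zero \<Rightarrow> 'a set) \<Rightarrow> 'a set" where
  "zer A = {x. 0 \<in> A x}"

text \<open>Resolvent (Id + gamma A)^{-1}, as a set-valued operator.\<close>
definition resolvent :: "real \<Rightarrow> ('a::real_vector \<Rightarrow> 'a set) \<Rightarrow> 'a \<Rightarrow> 'a set" where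
  "resolvent \<gamma> A z = {p. \<exists>u \<in> A p. z = p + \<gamma> *\<^sub>R u}"

definition cocoercive :: "real \<Rightarrow> ('a::real_inner \<Rightarrow> 'a) \<Rightarrow> bool" where
  "cocoercive c T \<longleftrightarrow> (\<forall>x y. inner (T x - T y) (x - y) \<ge> c * (norm (T x - T y))\<^sup>2)"

definition weakly_converges :: "(nat \<Rightarrow> 'a::real_inner) \<Rightarrow> 'a \<Rightarrow> bool" where
  "weakly_converges x p \<longleftrightarrow> (\<forall>z. (\<lambda>k. inner (x k) z) \<longlonglongrightarrow> inner p z)"

end

theory Submission
  imports Defs "HOL-Library.Diagonal_Subsequence"
begin

text \<open>
  For every zero z of A1 + A2 + B + C the quantity
  ||x(k+1) - z||^2 - 2\<gamma> <A2 y(k) - A2 x(k), y(k) - z> + (\<gamma>L + 2\<gamma>^2 L\<mu>) ||x(k) - y(k)||^2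
  decreases by at least \<epsilon> ||x(k+1) - y(k+1)||^2 per step: monotonicity of A1 + A2 and B and
  cocoercivity of C control the cross terms, and the correction A2 y(k) - A2 x(k) used by the
  next step telescopes into the quantity itself. Hence x(k) - y(k) tends to 0, the sequence is
  bounded, and ||x(k) - z|| converges for every zero z. The iteration exhibits an element of
  (A1 + A2 + B + C)(y(k)) tending to 0 strongly; the sum is maximally monotone (by Minty's
  theorem), so its graph is weak-strong closed and every weak cluster point of x is a zero.
  Opial's lemma then gives weak convergence of the whole sequence.
\<close>

section \<open>Minimal-norm points, Riesz representation, intersections of convex sets\<close>

lemma Cauchy_if_dist_le_null:
  fixes p :: "nat \<Rightarrow> 'a::metric_space"
  assumes bound: "\<And>n m. n \<le> m \<Longrightarrow> dist (p n) (p m) \<le> b n" and null: "b \<longlonglongrightarrow> 0"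
  shows "Cauchy p"
proof (rule metric_CauchyI)
  fix e :: real assume "e > 0"
  then obtain N where N: "\<And>n. n \<ge> N \<Longrightarrow> b n < e"
    using order_tendstoD(2)[OF null] by (auto simp: eventually_sequentially)
  have "dist (p m) (p n) < e" if "m \<ge> N" "n \<ge> N" for m n
  proof (cases "m \<le> n")
    case True then show ?thesis using bound[of m n] N[of m] that by simp
  next
    case False then show ?thesis using bound[of n m] N[of n] that by (simp add: dist_commute)
  qed
  then show "\<exists>N. \<forall>m\<ge>N. \<forall>n\<ge>N. dist (p m) (p n) < e" by blast
qed

lemma norm_diff_sq_le_in_convex:
  fixes u v :: "'a::real_inner"
  assumes "convex C" "u \<in> C" "v \<in> C" and lower: "\<And>z. z \<in> C \<Longrightarrow> r \<le> norm z" and "0 \<le> r"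
  shows "(norm (u - v))\<^sup>2 \<le> 2 * (norm u)\<^sup>2 + 2 * (norm v)\<^sup>2 - 4 * r\<^sup>2"
proof -
  have "(1/2) *\<^sub>R (u + v) \<in> C"
    using convexD[OF assms(1-3), of "1/2" "1/2"] by (simp add: scaleR_add_right)
  then have "2 * r \<le> norm (u + v)" using lower by fastforce
  then have "(2 * r)\<^sup>2 \<le> (norm (u + v))\<^sup>2" using \<open>0 \<le> r\<close> by (intro power_mono) auto
  moreover have "(norm (u - v))\<^sup>2 + (norm (u + v))\<^sup>2 = 2 * (norm u)\<^sup>2 + 2 * (norm v)\<^sup>2"
    unfolding power2_norm_eq_inner
    by (simp add: inner_add_left inner_add_right inner_diff_left inner_diff_right inner_commute)
  ultimately show ?thesis by (simp add: power_mult_distrib)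
qed

lemma closed_convex_min_norm:
  fixes C :: "'a::{real_inner,complete_space} set"
  assumes "closed C" "convex C" "C \<noteq> {}"
  obtains p where "p \<in> C" "\<And>z. z \<in> C \<Longrightarrow> norm p \<le> norm z"
proof -
  define r where "r = Inf (norm ` C)"
  define e :: "nat \<Rightarrow> real" where "e n = inverse (Suc n)" for n
  have bdd: "bdd_below (norm ` C)" by (rule bdd_belowI[of _ 0]) auto
  have r_le: "r \<le> norm z" if "z \<in> C" for z
    unfolding r_def using bdd that by (intro cInf_lower) auto
  have r0: "0 \<le> r" unfolding r_def using assms(3) by (intro cInf_greatest) auto
  have e0: "0 < e n" and e_mono: "n \<le> m \<Longrightarrow> e m \<le> e n" for n m
    unfolding e_def by (auto simp: field_simps)
  have e_null: "e \<longlonglongrightarrow> 0" unfolding e_def by (rule LIMSEQ_inverse_real_of_nat)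
  have "\<exists>q\<in>C. norm q < r + e n" for n
    using cInf_lessD[of "norm ` C" "r + e n"] assms(3) e0[of n] unfolding r_def by auto
  then obtain q where qC: "\<And>n. q n \<in> C" and q_norm: "\<And>n. norm (q n) < r + e n" by metis
  have "dist (q n) (q m) \<le> sqrt (4 * ((r + e n)\<^sup>2 - r\<^sup>2))" if "n \<le> m" for n m
  proof -
    have "(norm (q n))\<^sup>2 \<le> (r + e n)\<^sup>2" "(norm (q m))\<^sup>2 \<le> (r + e n)\<^sup>2"
      using q_norm[of n] q_norm[of m] e_mono[OF that] by (auto intro!: power_mono)
    moreover have "(norm (q n - q m))\<^sup>2 \<le> 2 * (norm (q n))\<^sup>2 + 2 * (norm (q m))\<^sup>2 - 4 * r\<^sup>2"
      using r_le by (intro norm_diff_sq_le_in_convex[OF assms(2) qC qC _ r0])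
    ultimately have "(norm (q n - q m))\<^sup>2 \<le> 4 * ((r + e n)\<^sup>2 - r\<^sup>2)" by (simp add: algebra_simps)
    then show ?thesis by (simp add: dist_norm real_le_rsqrt)
  qed
  moreover have "(\<lambda>n. sqrt (4 * ((r + e n)\<^sup>2 - r\<^sup>2))) \<longlonglongrightarrow> sqrt (4 * ((r + 0)\<^sup>2 - r\<^sup>2))"
    by (intro tendsto_intros e_null)
  ultimately have "Cauchy q" by (intro Cauchy_if_dist_le_null) auto
  then obtain p where qp: "q \<longlonglongrightarrow> p" using Cauchy_convergent_iff convergent_def by blast
  have "p \<in> C" using assms(1) qC qp closed_sequentially by blast
  moreover have "norm p \<le> r + 0"
    using q_norm by (intro LIMSEQ_le[OF tendsto_norm[OF qp], of "\<lambda>n. r + e n"] tendsto_intros e_null)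
      (auto intro: less_imp_le)
  ultimately show ?thesis using r_le that by fastforce
qed

definition min_norm_point :: "'a::real_inner set \<Rightarrow> 'a" where
  "min_norm_point C = (SOME p. p \<in> C \<and> (\<forall>z\<in>C. norm p \<le> norm z))"

lemma
  fixes C :: "'a::{real_inner,complete_space} set"
  assumes "closed C" "convex C" "C \<noteq> {}"
  shows min_norm_point_mem: "min_norm_point C \<in> C"
    and min_norm_point_le: "z \<in> C \<Longrightarrow> norm (min_norm_point C) \<le> norm z"
proof -
  have "\<exists>p. p \<in> C \<and> (\<forall>z\<in>C. norm p \<le> norm z)" by (rule closed_convex_min_norm[OF assms]) blast
  then have "min_norm_point C \<in> C \<and> (\<forall>z\<in>C. norm (min_norm_point C) \<le> norm z)"
    unfolding min_norm_point_def by (rule someI_ex)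
  then show "min_norm_point C \<in> C" "z \<in> C \<Longrightarrow> norm (min_norm_point C) \<le> norm z" by auto
qed

lemma min_norm_point_dist_sq:
  fixes C :: "'a::{real_inner,complete_space} set"
  assumes "closed C" "convex C" "q \<in> C"
  shows "(norm (min_norm_point C - q))\<^sup>2 \<le> 2 * ((norm q)\<^sup>2 - (norm (min_norm_point C))\<^sup>2)"
proof -
  have "C \<noteq> {}" using assms(3) by blast
  then have "(norm (min_norm_point C - q))\<^sup>2
      \<le> 2 * (norm (min_norm_point C))\<^sup>2 + 2 * (norm q)\<^sup>2 - 4 * (norm (min_norm_point C))\<^sup>2"
    using min_norm_point_le[OF assms(1,2)]
    by (intro norm_diff_sq_le_in_convex[OF assms(2) min_norm_point_mem[OF assms(1,2)] assms(3)]) auto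
  then show ?thesis by simp
qed

lemma inner_eq_0_if_norm_le_along_line:
  fixes f h :: "'a::real_inner"
  assumes "\<And>t. norm f \<le> norm (f + t *\<^sub>R h)"
  shows "inner f h = 0"
proof (rule ccontr)
  assume "inner f h \<noteq> 0"
  define c where "c = (norm h)\<^sup>2"
  define s where "s = inner f h / (c + 1)"
  have "c + 1 > 0" unfolding c_def by (simp add: add_nonneg_pos)
  then have fh: "inner f h = s * (c + 1)" and "s \<noteq> 0"
    using \<open>inner f h \<noteq> 0\<close> unfolding s_def by auto
  have "(norm f)\<^sup>2 \<le> (norm (f - s *\<^sub>R h))\<^sup>2" using assms[of "- s"] by (simp add: power_mono)
  also have "\<dots> = (norm f)\<^sup>2 - s\<^sup>2 * (c + 2)"
    unfolding power2_norm_eq_inner using power2_norm_eq_inner[of h]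
    by (simp add: inner_diff_left inner_diff_right inner_commute fh c_def power2_eq_square algebra_simps)
  moreover have "0 < s\<^sup>2 * (c + 2)" using \<open>s \<noteq> 0\<close> \<open>c + 1 > 0\<close> by simp
  ultimately show False by simp
qed

lemma riesz_representation_closed_subspace:
  fixes S :: "'a::{real_inner,complete_space} set" and g :: "'a \<Rightarrow> real"
  assumes S: "subspace S" "closed S"
    and add: "\<And>u v. u \<in> S \<Longrightarrow> v \<in> S \<Longrightarrow> g (u + v) = g u + g v"
    and scale: "\<And>c u. u \<in> S \<Longrightarrow> g (c *\<^sub>R u) = c * g u"
    and bound: "\<And>u. u \<in> S \<Longrightarrow> \<bar>g u\<bar> \<le> K * norm u"
  shows "\<exists>p\<in>S. \<forall>h\<in>S. inner p h = g h"
proof (cases "\<forall>h\<in>S. g h = 0")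
  case True then show ?thesis using subspace_0[OF S(1)] by force
next
  case False
  then obtain e where eS: "e \<in> S" and ge: "g e \<noteq> 0" by blast
  have diff: "g (u - v) = g u - g v" if "u \<in> S" "v \<in> S" for u v
    using add[OF that(1) subspace_neg[OF S(1) that(2)]] scale[OF that(2), of "-1"] by simp
  have g0: "g 0 = 0" using scale[OF subspace_0[OF S(1)], of 0] by simp
  \<comment> \<open>The minimal-norm point f of e + ker g is orthogonal to ker g and represents g up to scaling.\<close>
  define N where "N = {u \<in> S. g u = 0}"
  have N: "subspace N"
    unfolding N_def subspace_def using S(1) add scale g0 by (auto simp: subspace_0 subspace_add subspace_scale)
  have "closed N"
    unfolding closed_sequential_limits
  proof (intro allI impI, elim conjE)
    fix w v assume wN: "\<forall>n. w n \<in> N" and wv: "w \<longlonglongrightarrow> v"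
    have vS: "v \<in> S" using S(2) wN wv closed_sequentially unfolding N_def by blast
    have "\<bar>g v\<bar> \<le> K * norm (v - w n)" for n
      using bound[of "v - w n"] diff[OF vS, of "w n"] wN S(1) vS unfolding N_def by (auto simp: subspace_diff)
    moreover have "(\<lambda>n. K * norm (v - w n)) \<longlonglongrightarrow> K * norm (v - v)" by (intro tendsto_intros wv)
    ultimately have "\<bar>g v\<bar> \<le> 0" by (intro LIMSEQ_le_const[of "\<lambda>n. K * norm (v - w n)"]) auto
    then show "v \<in> N" using vS unfolding N_def by simp
  qed
  moreover have "convex ((+) e ` N)" "(+) e ` N \<noteq> {}"
    using N subspace_0[OF N] by (auto simp: convex_translation subspace_imp_convex)
  ultimately have eN: "closed ((+) e ` N)" "convex ((+) e ` N)" "(+) e ` N \<noteq> {}"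
    by (auto simp: closed_translation)
  define f where "f = min_norm_point ((+) e ` N)"
  have fN: "f \<in> (+) e ` N" and f_min: "\<And>z. z \<in> (+) e ` N \<Longrightarrow> norm f \<le> norm z"
    unfolding f_def using min_norm_point_mem[OF eN] min_norm_point_le[OF eN] by blast+
  then obtain n0 where n0: "n0 \<in> N" "f = e + n0" by blast
  have fS: "f \<in> S" and gf: "g f = g e"
    using n0 eS add[OF eS] S(1) unfolding N_def by (auto simp: subspace_add)
  have orth: "inner f h = 0" if "h \<in> N" for h
  proof (rule inner_eq_0_if_norm_le_along_line)
    fix t :: real
    have "f + t *\<^sub>R h = e + (n0 + t *\<^sub>R h)" using n0 by simp
    then show "norm f \<le> norm (f + t *\<^sub>R h)"
      using f_min n0 that N by (simp add: subspace_add subspace_scale)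
  qed
  have "f \<noteq> 0" using gf ge g0 by auto
  show ?thesis
  proof (intro bexI ballI)
    show "(g f / inner f f) *\<^sub>R f \<in> S" using fS S(1) by (simp add: subspace_scale)
  next
    fix h assume hS: "h \<in> S"
    have "h - (g h / g f) *\<^sub>R f \<in> N"
      using hS fS ge gf S(1) diff scale unfolding N_def by (simp add: subspace_diff subspace_scale)
    then have "inner f h = (g h / g f) * inner f f"
      using orth[of "h - (g h / g f) *\<^sub>R f"] by (simp add: inner_diff_right)
    then show "inner ((g f / inner f f) *\<^sub>R f) h = g h" using \<open>f \<noteq> 0\<close> ge gf by simp
  qed
qed

lemma finite_subsets_chain_tendsto_Sup:
  fixes f :: "'i set \<Rightarrow> real" and I :: "'i set"
  defines "FS \<equiv> {F. finite F \<and> F \<subseteq> I}"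
  assumes mono: "\<And>F F'. F \<in> FS \<Longrightarrow> F' \<in> FS \<Longrightarrow> F \<subseteq> F' \<Longrightarrow> f F \<le> f F'"
    and bounded: "\<And>F. F \<in> FS \<Longrightarrow> f F \<le> M"
  obtains G where "\<And>n. G n \<in> FS" "\<And>n m. n \<le> m \<Longrightarrow> G n \<subseteq> G m" "(\<lambda>n. f (G n)) \<longlonglongrightarrow> Sup (f ` FS)"
proof -
  define R where "R = Sup (f ` FS)"
  have FS_ne: "f ` FS \<noteq> {}" unfolding FS_def by auto
  have bdd: "bdd_above (f ` FS)" using bounded by (intro bdd_aboveI[of _ M]) auto
  have le_R: "f F \<le> R" if "F \<in> FS" for F unfolding R_def using bdd that by (intro cSup_upper) auto
  define e :: "nat \<Rightarrow> real" where "e n = inverse (Suc n)" for n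
  have "\<exists>F\<in>FS. R - e n < f F" for n
    using less_cSup_iff[OF FS_ne bdd, of "R - e n"] unfolding R_def e_def by simp
  then obtain F where F: "\<And>n. F n \<in> FS" and F_f: "\<And>n. R - e n < f (F n)" by metis
  define G where "G n = (\<Union>k\<le>n. F k)" for n
  have G: "G n \<in> FS" for n using F unfolding G_def FS_def by auto
  have G_mono: "n \<le> m \<Longrightarrow> G n \<subseteq> G m" for n m unfolding G_def by (auto intro: order_trans)
  have "(\<lambda>n. f (G n)) \<longlonglongrightarrow> R"
  proof (rule real_tendsto_sandwich[of "\<lambda>n. R - e n" _ _ "\<lambda>n. R"])
    have "R - e n \<le> f (G n)" for n
      using F_f[of n] mono[OF F G, of n n] unfolding G_def by fastforce
    then show "\<forall>\<^sub>F n in sequentially. R - e n \<le> f (G n)" by simp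
    show "\<forall>\<^sub>F n in sequentially. f (G n) \<le> R" using le_R[OF G] by simp
    show "(\<lambda>n. R - e n) \<longlonglongrightarrow> R"
      using tendsto_diff[OF tendsto_const LIMSEQ_inverse_real_of_nat] unfolding e_def by simp
  qed simp
  then show ?thesis using that G G_mono unfolding R_def by blast
qed

lemma closed_convex_family_Inter_nonempty:
  fixes K :: "'i \<Rightarrow> 'a::{real_inner,complete_space} set"
  assumes i0: "i0 \<in> I" and bounded: "bounded (K i0)"
    and closed: "\<And>i. i \<in> I \<Longrightarrow> closed (K i)" and convex: "\<And>i. i \<in> I \<Longrightarrow> convex (K i)"
    and finite_Inter: "\<And>F. finite F \<Longrightarrow> F \<subseteq> I \<Longrightarrow> (\<Inter>i\<in>insert i0 F. K i) \<noteq> {}"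
  shows "\<exists>x. \<forall>i\<in>I. x \<in> K i"
proof -
  define KK where "KK F = (\<Inter>i\<in>insert i0 F. K i)" for F
  define FS where "FS = {F. finite F \<and> F \<subseteq> I}"
  have KK: "closed (KK F)" "convex (KK F)" "KK F \<noteq> {}" if "F \<in> FS" for F
  proof -
    show "closed (KK F)" unfolding KK_def using that i0 closed unfolding FS_def by (intro closed_INT) auto
    show "convex (KK F)" unfolding KK_def using that i0 convex unfolding FS_def by (intro convex_INT) auto
    show "KK F \<noteq> {}" unfolding KK_def using that finite_Inter unfolding FS_def by blast
  qed
  \<comment> \<open>The minimal norms of the finite intersections increase to their supremum R; the
    minimal-norm points along a chain realising R then form a Cauchy sequence.\<close>
  define pt where "pt F = min_norm_point (KK F)" for F
  have pt: "pt F \<in> KK F" if "F \<in> FS" for F unfolding pt_def using min_norm_point_mem KK[OF that] by blast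
  define rr where "rr F = norm (pt F)" for F
  have pt_sub: "pt F' \<in> KK F" if "F' \<in> FS" "F \<subseteq> F'" for F F'
    using pt[OF that(1)] that(2) unfolding KK_def by blast
  have rr_mono: "rr F \<le> rr F'" if "F \<in> FS" "F' \<in> FS" "F \<subseteq> F'" for F F'
    using min_norm_point_le[OF KK[OF that(1)] pt_sub[OF that(2,3)]] unfolding rr_def pt_def .
  obtain M where M: "\<And>z. z \<in> K i0 \<Longrightarrow> norm z \<le> M" using bounded unfolding bounded_iff by blast
  have rr_le_M: "rr F \<le> M" if "F \<in> FS" for F using pt[OF that] M unfolding rr_def KK_def by blast
  define R where "R = Sup (rr ` FS)"
  obtain G where G: "\<And>n. G n \<in> FS" and G_mono: "\<And>n m. n \<le> m \<Longrightarrow> G n \<subseteq> G m"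
    and rr_G: "(\<lambda>n. rr (G n)) \<longlonglongrightarrow> R"
    using finite_subsets_chain_tendsto_Sup[of I rr M] rr_mono rr_le_M unfolding FS_def R_def by blast
  have rr_le_R: "rr F \<le> R" if "F \<in> FS" for F
    unfolding R_def using that rr_le_M by (intro cSup_upper bdd_aboveI[of _ M]) auto
  define b where "b n = sqrt (2 * (R\<^sup>2 - (rr (G n))\<^sup>2))" for n
  have b_null: "b \<longlonglongrightarrow> 0"
    using tendsto_real_sqrt[OF tendsto_mult[OF tendsto_const tendsto_diff[OF tendsto_const tendsto_power[OF rr_G]]], of 2 "R\<^sup>2" 2]
    unfolding b_def by simp
  have close: "dist (pt (G n)) (pt F') \<le> b n" if "F' \<in> FS" "G n \<subseteq> F'" for n F'
  proof -
    have "(rr F')\<^sup>2 \<le> R\<^sup>2" using rr_le_R[OF that(1)] by (simp add: rr_def power_mono)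
    then have "(dist (pt (G n)) (pt F'))\<^sup>2 \<le> 2 * (R\<^sup>2 - (rr (G n))\<^sup>2)"
      using min_norm_point_dist_sq[OF KK(1,2)[OF G] pt_sub[OF that]] unfolding rr_def pt_def
      by (simp add: dist_norm)
    then show ?thesis unfolding b_def by (rule real_le_rsqrt)
  qed
  have "Cauchy (\<lambda>n. pt (G n))"
  proof (rule Cauchy_if_dist_le_null[OF _ b_null])
    fix n m :: nat assume "n \<le> m"
    then show "dist (pt (G n)) (pt (G m)) \<le> b n" by (rule close[OF G G_mono])
  qed
  then obtain x where px: "(\<lambda>n. pt (G n)) \<longlonglongrightarrow> x" using Cauchy_convergent_iff convergent_def by blast
  have "x \<in> K i" if "i \<in> I" for i
  proof -
    have GI: "insert i (G n) \<in> FS" for n using G[of n] that unfolding FS_def by auto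
    have "(\<lambda>n. pt (G n) - pt (insert i (G n))) \<longlonglongrightarrow> 0"
    proof (rule Lim_null_comparison[OF _ b_null])
      have "norm (pt (G n) - pt (insert i (G n))) \<le> b n" for n
        using close[OF GI subset_insertI, of n] by (simp only: dist_norm)
      then show "\<forall>\<^sub>F n in sequentially. norm (pt (G n) - pt (insert i (G n))) \<le> b n" by simp
    qed
    then have "(\<lambda>n. pt (insert i (G n))) \<longlonglongrightarrow> x" by (rule Lim_transform2[OF px])
    moreover have "pt (insert i (G n)) \<in> K i" for n using pt[OF GI] unfolding KK_def by simp
    ultimately show ?thesis by (rule closed_sequentially[OF closed[OF that], rotated])
  qed
  then show ?thesis by blast
qed

section \<open>Weak sequential compactness and Opial's lemma\<close>

lemma weakly_converges_diff_null:
  assumes "weakly_converges x p" "d \<longlonglongrightarrow> 0"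
  shows "weakly_converges (\<lambda>k. x k - d k) p"
  unfolding weakly_converges_def
proof
  fix w
  have "(\<lambda>k. inner (x k) w) \<longlonglongrightarrow> inner p w" using assms(1) unfolding weakly_converges_def ..
  moreover have "(\<lambda>k. inner (d k) w) \<longlonglongrightarrow> inner 0 w" by (intro tendsto_intros assms(2))
  ultimately have "(\<lambda>k. inner (x k) w - inner (d k) w) \<longlonglongrightarrow> inner p w - inner 0 w"
    by (rule tendsto_diff)
  then show "(\<lambda>k. inner (x k - d k) w) \<longlonglongrightarrow> inner p w" by (simp add: inner_diff_left)
qed

lemma bounded_range_inner_bound:
  fixes x :: "nat \<Rightarrow> 'a::real_inner"
  assumes "bounded (range x)"
  shows "\<exists>M\<ge>0. \<forall>k v. \<bar>inner (x k) v\<bar> \<le> M * norm v"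
proof -
  obtain M where M: "\<And>k. norm (x k) \<le> M" using assms unfolding bounded_iff by blast
  have "\<bar>inner (x k) v\<bar> \<le> M * norm v" for k v
    using order_trans[OF Cauchy_Schwarz_ineq2 mult_right_mono[OF M norm_ge_zero]] .
  moreover have "0 \<le> M" using M[of 0] norm_ge_zero[of "x 0"] by linarith
  ultimately show ?thesis by blast
qed

lemma subspace_inner_convergent: "subspace {v. convergent (\<lambda>j. inner (z j) v)}"
  unfolding subspace_def
  by (simp add: inner_add_right convergent_add convergent_mult_const_iff convergent_const
      convergent_mult)

lemma closed_inner_convergent:
  fixes z :: "nat \<Rightarrow> 'a::real_inner"
  assumes "bounded (range z)"
  shows "closed {v. convergent (\<lambda>j. inner (z j) v)}"
  unfolding closed_sequential_limits
proof (intro allI impI, elim conjE)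
  obtain M where M0: "0 \<le> M" and M: "\<And>k v. \<bar>inner (z k) v\<bar> \<le> M * norm v"
    using bounded_range_inner_bound[OF assms] by blast
  fix w v assume w_conv: "\<forall>n. w n \<in> {v. convergent (\<lambda>j. inner (z j) v)}" and wv: "w \<longlonglongrightarrow> v"
  have "Cauchy (\<lambda>j. inner (z j) v)"
  proof (rule metric_CauchyI)
    fix e :: real assume e: "e > 0"
    define e' where "e' = e / (4 * M + 4)"
    have e'0: "e' > 0" and Me': "M * e' < e / 4" unfolding e'_def using e M0 by (simp_all add: field_simps)
    obtain n where n: "norm (v - w n) < e'" using wv e'0 unfolding LIMSEQ_def dist_norm
      by (metis norm_minus_commute order_refl)
    have "Cauchy (\<lambda>j. inner (z j) (w n))" using w_conv by (simp add: convergent_Cauchy)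
    then obtain N where N: "\<And>a b. a \<ge> N \<Longrightarrow> b \<ge> N \<Longrightarrow> dist (inner (z a) (w n)) (inner (z b) (w n)) < e / 2"
      using e unfolding Cauchy_def by (meson half_gt_zero)
    have near: "\<bar>inner (z a) (v - w n)\<bar> < e / 4" for a
      using M[of a "v - w n"] n Me' M0 by (smt (verit) mult_left_mono)
    have "dist (inner (z a) v) (inner (z b) v) < e" if "a \<ge> N" "b \<ge> N" for a b
      using N[OF that] near[of a] near[of b] unfolding dist_real_def inner_diff_right by linarith
    then show "\<exists>N. \<forall>a\<ge>N. \<forall>b\<ge>N. dist (inner (z a) v) (inner (z b) v) < e" by blast
  qed
  then show "v \<in> {v. convergent (\<lambda>j. inner (z j) v)}" by (simp add: real_Cauchy_convergent)
qed

lemma weakly_convergent_if_inner_convergent: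
  fixes z :: "nat \<Rightarrow> 'a::{real_inner,complete_space}"
  assumes bounded: "bounded (range z)" and conv: "\<And>i. convergent (\<lambda>j. inner (z j) (z i))"
  shows "\<exists>p. weakly_converges z p"
proof -
  define S where "S = {v. convergent (\<lambda>j. inner (z j) v)}"
  define g where "g v = lim (\<lambda>j. inner (z j) v)" for v
  have S: "subspace S" "closed S"
    unfolding S_def by (simp_all add: subspace_inner_convergent closed_inner_convergent bounded)
  obtain M where "0 \<le> M" and M: "\<And>k v. \<bar>inner (z k) v\<bar> \<le> M * norm v"
    using bounded_range_inner_bound[OF bounded] by blast
  have g: "(\<lambda>j. inner (z j) v) \<longlonglongrightarrow> g v" if "v \<in> S" for v
    using that unfolding S_def g_def by (simp add: convergent_LIMSEQ_iff)
  have "g (u + v) = g u + g v" if "u \<in> S" "v \<in> S" for u v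
  proof -
    have "(\<lambda>j. inner (z j) (u + v)) \<longlonglongrightarrow> g u + g v"
      unfolding inner_add_right by (intro tendsto_add g that)
    then show ?thesis by (rule LIMSEQ_unique[OF g[OF subspace_add[OF S(1) that]]])
  qed
  moreover have "g (c *\<^sub>R u) = c * g u" if "u \<in> S" for c u
  proof -
    have "(\<lambda>j. inner (z j) (c *\<^sub>R u)) \<longlonglongrightarrow> c * g u"
      unfolding inner_scaleR_right by (intro tendsto_mult_left g that)
    then show ?thesis by (rule LIMSEQ_unique[OF g[OF subspace_scale[OF S(1) that]]])
  qed
  moreover have "\<bar>g u\<bar> \<le> M * norm u" if "u \<in> S" for u
    by (rule LIMSEQ_le_const2[OF tendsto_rabs[OF g[OF that]]]) (use M in blast)
  ultimately obtain p where pS: "p \<in> S" and pg: "\<And>h. h \<in> S \<Longrightarrow> inner p h = g h"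
    using riesz_representation_closed_subspace[OF S, of g M] by blast
  have "(\<lambda>j. inner (z j) w) \<longlonglongrightarrow> inner p w" for w
  proof -
    \<comment> \<open>s is the orthogonal projection of w onto S, and the z j lie in S.\<close>
    have "\<exists>s\<in>S. \<forall>h\<in>S. inner s h = inner w h"
      by (rule riesz_representation_closed_subspace[OF S, where K = "norm w"])
        (simp_all add: inner_add_right Cauchy_Schwarz_ineq2[of w])
    then obtain s where sS: "s \<in> S" and sw: "\<And>h. h \<in> S \<Longrightarrow> inner s h = inner w h" by blast
    have zS: "z j \<in> S" for j unfolding S_def using conv by simp
    have "(\<lambda>j. inner (z j) s) \<longlonglongrightarrow> inner p w"
      using g[OF sS] pg[OF sS] sw[OF pS] by (simp add: inner_commute)
    then show ?thesis using sw[OF zS] by (simp add: inner_commute)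
  qed
  then show ?thesis unfolding weakly_converges_def by blast
qed

lemma weakly_convergent_subseq:
  fixes x :: "nat \<Rightarrow> 'a::{real_inner,complete_space}"
  assumes "bounded (range x)"
  obtains r p where "strict_mono r" "weakly_converges (x \<circ> r) p"
proof -
  obtain M where "0 \<le> M" and M: "\<And>k v. \<bar>inner (x k) v\<bar> \<le> M * norm v"
    using bounded_range_inner_bound[OF assms] by blast
  interpret D: subseqs "\<lambda>n r. convergent (\<lambda>j. inner (x (r j)) (x n))"
  proof
    fix n and s :: "nat \<Rightarrow> nat"
    have "bounded (range (\<lambda>j. inner (x (s j)) (x n)))"
      using M unfolding bounded_iff real_norm_def by blast
    then obtain l r' where "strict_mono r'" "((\<lambda>j. inner (x (s j)) (x n)) \<circ> r') \<longlonglongrightarrow> l"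
      using bounded_imp_convergent_subsequence by blast
    then show "\<exists>r'. strict_mono r' \<and> convergent (\<lambda>j. inner (x ((s \<circ> r') j)) (x n))"
      by (auto simp: o_def convergent_def)
  qed
  have "convergent (\<lambda>j. inner (x (D.diagseq j)) (x n))" for n
  proof -
    have "convergent (\<lambda>j. inner (x ((D.diagseq \<circ> (+) (Suc n)) j)) (x n))"
      by (rule D.diagseq_holds) (auto simp: o_def dest: convergent_subseq_convergent)
    then have "convergent (\<lambda>j. inner (x (D.diagseq (j + Suc n))) (x n))" by (simp add: add.commute)
    then show ?thesis by (rule convergent_ignore_initial_segment[THEN iffD1])
  qed
  then obtain p where "weakly_converges (x \<circ> D.diagseq) p"
    using weakly_convergent_if_inner_convergent[of "x \<circ> D.diagseq"] assms
    by (fastforce simp: o_def intro: bounded_subset)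
  then show ?thesis using that D.subseq_diagseq by blast
qed

lemma weak_cluster_points_eq:
  fixes x :: "nat \<Rightarrow> 'a::real_inner"
  assumes "convergent (\<lambda>k. (norm (x k - p))\<^sup>2)" "convergent (\<lambda>k. (norm (x k - q))\<^sup>2)"
    and "strict_mono r" "weakly_converges (x \<circ> r) p"
    and "strict_mono s" "weakly_converges (x \<circ> s) q"
  shows "p = q"
proof -
  have id: "inner (x k) (q - p) = ((norm (x k - p))\<^sup>2 - (norm (x k - q))\<^sup>2 - (norm p)\<^sup>2 + (norm q)\<^sup>2) / 2" for k
    unfolding power2_norm_eq_inner by (simp add: inner_diff_left inner_diff_right inner_commute algebra_simps)
  obtain a b where "(\<lambda>k. (norm (x k - p))\<^sup>2) \<longlonglongrightarrow> a" "(\<lambda>k. (norm (x k - q))\<^sup>2) \<longlonglongrightarrow> b"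
    using assms(1,2) unfolding convergent_def by blast
  then have l: "(\<lambda>k. inner (x k) (q - p)) \<longlonglongrightarrow> (a - b - (norm p)\<^sup>2 + (norm q)\<^sup>2) / 2"
    unfolding id by (intro tendsto_intros) auto
  have "((\<lambda>k. inner (x k) (q - p)) \<circ> r) \<longlonglongrightarrow> inner p (q - p)"
    "((\<lambda>k. inner (x k) (q - p)) \<circ> s) \<longlonglongrightarrow> inner q (q - p)"
    using assms(4,6) unfolding weakly_converges_def by (simp_all add: o_def)
  then have "inner p (q - p) = inner q (q - p)"
    using LIMSEQ_subseq_LIMSEQ[OF l assms(3)] LIMSEQ_subseq_LIMSEQ[OF l assms(5)] LIMSEQ_unique by metis
  then have "inner (q - p) (q - p) = 0" by (simp add: inner_diff_left)
  then show ?thesis by simp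
qed

theorem opial:
  fixes x :: "nat \<Rightarrow> 'a::{real_inner,complete_space}"
  assumes bounded: "bounded (range x)"
    and conv: "\<And>z. z \<in> Z \<Longrightarrow> convergent (\<lambda>k. (norm (x k - z))\<^sup>2)"
    and cluster: "\<And>r p. strict_mono r \<Longrightarrow> weakly_converges (x \<circ> r) p \<Longrightarrow> p \<in> Z"
  shows "\<exists>p\<in>Z. weakly_converges x p"
proof -
  obtain r p where r: "strict_mono r" and xrp: "weakly_converges (x \<circ> r) p"
    using weakly_convergent_subseq[OF bounded] by blast
  have pZ: "p \<in> Z" by (rule cluster[OF r xrp])
  have "weakly_converges x p"
  proof (rule ccontr)
    \<comment> \<open>A subsequence staying away from p in some direction w has a weakly convergent
      subsequence, whose limit must nevertheless be p.\<close>
    assume "\<not> weakly_converges x p"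
    then obtain w e where e: "e > 0" and far: "\<And>N. \<exists>n\<ge>N. e \<le> \<bar>inner (x n) w - inner p w\<bar>"
      unfolding weakly_converges_def LIMSEQ_def dist_real_def by (meson not_less)
    then have "infinite {n. e \<le> \<bar>inner (x n) w - inner p w\<bar>}"
      unfolding infinite_nat_iff_unbounded_le by blast
    then obtain s :: "nat \<Rightarrow> nat" where s: "strict_mono s"
      and s_far: "\<And>n. e \<le> \<bar>inner (x (s n)) w - inner p w\<bar>"
      using infinite_enumerate by blast
    obtain t q where t: "strict_mono t" and xstq: "weakly_converges ((x \<circ> s) \<circ> t) q"
      using weakly_convergent_subseq[of "x \<circ> s"] bounded_subset[OF bounded] by (metis image_comp image_subsetI rangeI)
    have st: "strict_mono (s \<circ> t)" using s t by (rule strict_mono_o)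
    then have "q = p"
      using weak_cluster_points_eq[OF conv[OF cluster] conv[OF pZ] _ _ r xrp] xstq
      by (metis comp_assoc)
    then have "(\<lambda>n. inner (x (s (t n))) w) \<longlonglongrightarrow> inner p w"
      using xstq unfolding weakly_converges_def by (simp add: o_def)
    then have "(\<lambda>n. \<bar>inner (x (s (t n))) w - inner p w\<bar>) \<longlonglongrightarrow> \<bar>inner p w - inner p w\<bar>"
      by (rule tendsto_rabs[OF tendsto_diff[OF _ tendsto_const]])
    then have "e \<le> 0" using s_far by (intro LIMSEQ_le_const) auto
    with e show False by simp
  qed
  with pZ show ?thesis by blast
qed

section \<open>Maximal monotone operators\<close>

lemma mem_op_plus_sv_iff:
  fixes f :: "'a::ab_group_add"
  shows "f \<in> op_plus A (sv T) x \<longleftrightarrow> f - T x \<in> A x"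
proof
  assume "f \<in> op_plus A (sv T) x"
  then show "f - T x \<in> A x" unfolding op_plus_def sv_def by auto
next
  assume "f - T x \<in> A x"
  then show "f \<in> op_plus A (sv T) x" unfolding op_plus_def sv_def by force
qed

lemma monotone_op_plus_sv:
  assumes "monotone_op A" "monotone_op (sv T)"
  shows "monotone_op (op_plus A (sv T))"
  unfolding monotone_op_def
proof (intro allI impI)
  fix x y u v assume "u \<in> op_plus A (sv T) x" "v \<in> op_plus A (sv T) y"
  then have "u - T x \<in> A x" "v - T y \<in> A y" by (simp_all add: mem_op_plus_sv_iff)
  then have "0 \<le> inner ((u - T x) - (v - T y)) (x - y)" using assms(1) unfolding monotone_op_def by blast
  moreover have "0 \<le> inner (T x - T y) (x - y)" using assms(2) unfolding monotone_op_def sv_def by blast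
  ultimately show "0 \<le> inner (u - v) (x - y)" by (simp add: inner_diff_left algebra_simps)
qed

lemma cocoercive_imp_monotone_op:
  assumes "0 \<le> c" "cocoercive c T"
  shows "monotone_op (sv T)"
  unfolding monotone_op_def sv_def
proof clarsimp
  fix x y
  have "0 \<le> c * (norm (T x - T y))\<^sup>2" using assms(1) by simp
  then show "0 \<le> inner (T x - T y) (x - y)" using assms(2) unfolding cocoercive_def by (meson order_trans)
qed

lemma cocoercive_imp_lipschitz:
  assumes "0 < c" "cocoercive c T"
  shows "(inverse c)-lipschitz_on UNIV T"
  unfolding lipschitz_on_def dist_norm
proof (intro conjI ballI)
  fix a b
  have "c * (norm (T a - T b))\<^sup>2 \<le> norm (T a - T b) * norm (a - b)"
    using order_trans[OF _ norm_cauchy_schwarz] assms(2) unfolding cocoercive_def by blast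
  then have "c * norm (T a - T b) \<le> norm (a - b)"
    by (cases "T a = T b") (auto simp: power2_eq_square mult.assoc mult_le_cancel_left_pos)
  then show "norm (T a - T b) \<le> inverse c * norm (a - b)" using assms(1) by (simp add: field_simps)
qed (use assms(1) in simp)

lemma max_monotone_op_memI:
  assumes "max_monotone_op A" and related: "\<And>a b. b \<in> A a \<Longrightarrow> 0 \<le> inner (u - b) (x - a)"
  shows "u \<in> A x"
proof -
  define A' where "A' z = (if z = x then insert u (A z) else A z)" for z
  have A'_cases: "v \<in> A y \<or> (y = x \<and> v = u)" if "v \<in> A' y" for v y
    using that unfolding A'_def by (cases "y = x") auto
  have mono: "monotone_op A" using assms(1) unfolding max_monotone_op_def by simp
  have "monotone_op A'"
    unfolding monotone_op_def
  proof (intro allI impI)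
    fix y1 y2 v1 v2 assume v1: "v1 \<in> A' y1" and v2: "v2 \<in> A' y2"
    from A'_cases[OF v1] A'_cases[OF v2] show "0 \<le> inner (v1 - v2) (y1 - y2)"
    proof (elim disjE conjE)
      assume "v1 \<in> A y1" "v2 \<in> A y2"
      then show ?thesis using mono unfolding monotone_op_def by blast
    next
      assume "v1 \<in> A y1" "y2 = x" "v2 = u"
      moreover have "inner (v1 - u) (y1 - x) = inner (u - v1) (x - y1)"
        by (simp add: inner_diff_left inner_diff_right inner_commute)
      ultimately show ?thesis using related by simp
    next
      assume "y1 = x" "v1 = u" "v2 \<in> A y2"
      then show ?thesis using related by simp
    qed simp
  qed
  moreover have "\<forall>z. A z \<subseteq> A' z" unfolding A'_def by auto
  ultimately have "A' = A" using assms(1) unfolding max_monotone_op_def by blast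
  then have "A' x = A x" by simp
  then show ?thesis unfolding A'_def by (metis if_True insertI1)
qed

lemma max_monotone_op_graph_nonempty:
  assumes "max_monotone_op A"
  shows "\<exists>a b. b \<in> A a"
proof (rule ccontr)
  assume none: "\<not> ?thesis"
  then have "0 \<in> A 0" by (intro max_monotone_op_memI[OF assms]) auto
  with none show False by blast
qed

lemma le_0_if_slope_le_quadratic:
  fixes d N :: real
  assumes "\<And>t. 0 < t \<Longrightarrow> t \<le> 1 \<Longrightarrow> t * d \<le> t\<^sup>2 * N"
  shows "d \<le> 0"
proof (rule ccontr)
  assume "\<not> d \<le> 0"
  define t where "t = min 1 (d / (2 * (\<bar>N\<bar> + 1)))"
  have t: "0 < t" "t \<le> 1" using \<open>\<not> d \<le> 0\<close> unfolding t_def by auto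
  have "d \<le> t * N" using assms[OF t] t(1) by (simp add: power2_eq_square mult.assoc)
  also have "\<dots> \<le> t * \<bar>N\<bar>" using t(1) by (intro mult_left_mono) auto
  also have "\<dots> \<le> d / (2 * (\<bar>N\<bar> + 1)) * \<bar>N\<bar>" unfolding t_def by (intro mult_right_mono) auto
  also have "\<dots> < d" using \<open>\<not> d \<le> 0\<close> by (simp add: field_simps add_nonneg_pos)
  finally show False by simp
qed

lemma convex_combination_monotone_le:
  fixes G :: "('a::real_inner \<times> 'a) set"
  assumes "finite G" and nonneg: "\<And>g. g \<in> G \<Longrightarrow> 0 \<le> w g" and "sum w G = 1"
    and mono: "\<And>g g'. g \<in> G \<Longrightarrow> g' \<in> G \<Longrightarrow> 0 \<le> inner (fst g - fst g') (snd g - snd g')"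
  shows "(\<Sum>g\<in>G. w g * inner (snd g) ((\<Sum>g'\<in>G. w g' *\<^sub>R fst g') - fst g)) \<le> 0"
proof -
  define S where "S = (\<Sum>g\<in>G. \<Sum>g'\<in>G. w g * w g' * inner (snd g) (fst g' - fst g))"
  have "(\<Sum>g'\<in>G. w g' *\<^sub>R (fst g' - fst g)) = (\<Sum>g'\<in>G. w g' *\<^sub>R fst g') - fst g" for g
    using \<open>sum w G = 1\<close> by (simp add: scaleR_diff_right sum_subtractf scaleR_sum_left[symmetric])
  then have centre: "(\<Sum>g'\<in>G. w g' *\<^sub>R fst g') - fst g = (\<Sum>g'\<in>G. w g' *\<^sub>R (fst g' - fst g))" for g
    by (rule sym)
  have lhs: "(\<Sum>g\<in>G. w g * inner (snd g) ((\<Sum>g'\<in>G. w g' *\<^sub>R fst g') - fst g)) = S"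
    unfolding S_def centre by (simp add: inner_sum_right sum_distrib_left mult.assoc)
  \<comment> \<open>Symmetrise the double sum; each symmetric pair is minus a monotonicity term.\<close>
  have swap: "S = (\<Sum>g\<in>G. \<Sum>g'\<in>G. w g * w g' * inner (snd g') (fst g - fst g'))"
    unfolding S_def by (subst sum.swap) (simp add: mult.commute)
  have "2 * S = (\<Sum>g\<in>G. \<Sum>g'\<in>G. w g * w g' * inner (snd g) (fst g' - fst g))
       + (\<Sum>g\<in>G. \<Sum>g'\<in>G. w g * w g' * inner (snd g') (fst g - fst g'))"
    using swap unfolding S_def by simp
  also have "\<dots> = (\<Sum>g\<in>G. \<Sum>g'\<in>G. w g * w g' * (inner (snd g) (fst g' - fst g) + inner (snd g') (fst g - fst g')))"
    by (simp only: sum.distrib[symmetric] distrib_left)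
  also have "\<dots> = (\<Sum>g\<in>G. \<Sum>g'\<in>G. - (w g * w g' * inner (fst g - fst g') (snd g - snd g')))"
    by (intro sum.cong refl) (simp add: inner_diff_left inner_diff_right inner_commute algebra_simps)
  also have "\<dots> \<le> 0" by (intro sum_nonpos) (simp add: nonneg mono)
  finally show ?thesis using lhs by simp
qed

text \<open>Lifting a pair (a, b) to (-\<langle>a, b\<rangle>, a, b) turns the Debrunner--Flor inequality into the
  maximisation of a concave potential over the convex hull of the lifted pairs.\<close>

definition pair_lift :: "'a::real_inner \<times> 'a \<Rightarrow> real \<times> 'a \<times> 'a" where
  "pair_lift g = (- inner (fst g) (snd g), g)"

definition pair_potential :: "real \<times> 'a::real_inner \<times> 'a \<Rightarrow> real" where
  "pair_potential p = fst p - (norm (fst (snd p) - snd (snd p)))\<^sup>2 / 4"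

lemma pair_potential_nonpos:
  fixes G :: "('a::real_inner \<times> 'a) set"
  assumes "finite G"
    and mono: "\<And>g g'. g \<in> G \<Longrightarrow> g' \<in> G \<Longrightarrow> 0 \<le> inner (fst g - fst g') (snd g - snd g')"
    and "p \<in> convex hull (pair_lift ` G)"
  shows "pair_potential p \<le> 0"
proof -
  obtain s A B where p: "p = (s, A, B)" by (metis prod.exhaust)
  have fin: "finite (pair_lift ` G)" using \<open>finite G\<close> by simp
  obtain u where u0: "\<forall>q\<in>pair_lift ` G. 0 \<le> u q" and u1: "sum u (pair_lift ` G) = 1"
    and u_sum: "(\<Sum>q\<in>pair_lift ` G. u q *\<^sub>R q) = p"
    using assms(3) unfolding convex_hull_finite[OF fin] by blast
  have inj: "inj_on pair_lift G" unfolding inj_on_def pair_lift_def by auto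
  define w where "w = u \<circ> pair_lift"
  have w0: "\<And>g. g \<in> G \<Longrightarrow> 0 \<le> w g" using u0 unfolding w_def by auto
  have w1: "sum w G = 1" using u1 unfolding w_def by (simp add: sum.reindex[OF inj])
  have p_sum: "p = (\<Sum>g\<in>G. w g *\<^sub>R pair_lift g)" using u_sum unfolding w_def by (simp add: sum.reindex[OF inj])
  have s_sum: "s = (\<Sum>g\<in>G. w g * (- inner (fst g) (snd g)))"
    using arg_cong[OF p_sum, of fst] unfolding p fst_sum by (simp add: pair_lift_def)
  have A_sum: "A = (\<Sum>g\<in>G. w g *\<^sub>R fst g)" and B_sum: "B = (\<Sum>g\<in>G. w g *\<^sub>R snd g)"
    using arg_cong[OF p_sum, of "fst \<circ> snd"] arg_cong[OF p_sum, of "snd \<circ> snd"]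
    unfolding p by (simp_all add: fst_sum snd_sum pair_lift_def)
  have "(\<Sum>g\<in>G. w g * inner (snd g) (A - fst g)) \<le> 0"
    unfolding A_sum by (rule convex_combination_monotone_le[OF \<open>finite G\<close> w0 w1 mono])
  moreover have "(\<Sum>g\<in>G. w g * inner (snd g) (A - fst g)) = inner B A + s"
    unfolding B_sum s_sum
    by (simp add: inner_sum_left inner_diff_right sum_subtractf algebra_simps sum_negf)
      (simp add: inner_commute)
  moreover have "(norm (A + B))\<^sup>2 / 4 = (norm (A - B))\<^sup>2 / 4 + inner B A"
    unfolding power2_norm_eq_inner
    by (simp add: inner_add_left inner_add_right inner_diff_left inner_diff_right inner_commute
        algebra_simps) (simp add: field_simps)
  moreover have "pair_potential p = s - (norm (A - B))\<^sup>2 / 4" unfolding pair_potential_def p by simp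
  moreover have "0 \<le> (norm (A + B))\<^sup>2 / 4" by simp
  ultimately show ?thesis by linarith
qed

lemma inner_le_pair_potential_at_max:
  fixes a b :: "'a::real_inner"
  assumes "convex P" "pair_lift (a, b) \<in> P" "p \<in> P"
    and p_max: "\<And>q. q \<in> P \<Longrightarrow> pair_potential q \<le> pair_potential p"
  defines "x \<equiv> (1/2) *\<^sub>R (fst (snd p) - snd (snd p))"
  shows "inner (x + b) (x - a) \<le> pair_potential p"
proof -
  obtain s A B where p: "p = (s, A, B)" by (metis prod.exhaust)
  define d where "d = inner (x + b) (x - a) - pair_potential p"
  define N where "N = (norm ((a - b) - (A - B)))\<^sup>2 / 4"
  \<comment> \<open>Moving from the maximiser towards the lifted pair changes the potential by t*d - t^2*N.\<close>
  have "t * d \<le> t\<^sup>2 * N" if "0 < t" "t \<le> 1" for t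
  proof -
    have "(1 - t) *\<^sub>R p + t *\<^sub>R pair_lift (a, b) \<in> P"
      using that by (intro convexD[OF assms(1) assms(3) assms(2)]) auto
    then have "pair_potential ((1 - t) *\<^sub>R p + t *\<^sub>R pair_lift (a, b)) \<le> pair_potential p" by (rule p_max)
    moreover have "pair_potential ((1 - t) *\<^sub>R p + t *\<^sub>R pair_lift (a, b)) = pair_potential p + t * d - t\<^sup>2 * N"
      unfolding pair_potential_def d_def N_def x_def pair_lift_def p power2_norm_eq_inner
      by (simp add: inner_add_left inner_add_right inner_diff_left inner_diff_right inner_commute
          power2_eq_square algebra_simps) (simp add: field_simps)
    ultimately show ?thesis by simp
  qed
  then have "d \<le> 0" by (rule le_0_if_slope_le_quadratic)
  then show ?thesis unfolding d_def by simp
qed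

lemma debrunner_flor:
  fixes G :: "('a::real_inner \<times> 'a) set"
  assumes "finite G"
    and mono: "\<And>g g'. g \<in> G \<Longrightarrow> g' \<in> G \<Longrightarrow> 0 \<le> inner (fst g - fst g') (snd g - snd g')"
  shows "\<exists>x. \<forall>g\<in>G. inner (x + snd g) (x - fst g) \<le> 0"
proof (cases "G = {}")
  case True then show ?thesis by simp
next
  case False
  define P where "P = convex hull (pair_lift ` G)"
  have "compact P" unfolding P_def using \<open>finite G\<close> by (intro finite_imp_compact_convex_hull) auto
  moreover have "P \<noteq> {}" unfolding P_def using False by simp
  moreover have "continuous_on P pair_potential" unfolding pair_potential_def by (intro continuous_intros) auto
  ultimately have "\<exists>p\<in>P. \<forall>q\<in>P. pair_potential q \<le> pair_potential p" by (rule continuous_attains_sup)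
  then obtain p where pP: "p \<in> P" and p_max: "\<And>q. q \<in> P \<Longrightarrow> pair_potential q \<le> pair_potential p" by blast
  define x where "x = (1/2) *\<^sub>R (fst (snd p) - snd (snd p))"
  have "pair_potential p \<le> 0" using pair_potential_nonpos[OF \<open>finite G\<close> mono pP[unfolded P_def]] .
  moreover have "inner (x + snd g) (x - fst g) \<le> pair_potential p" if "g \<in> G" for g
  proof -
    have "pair_lift (fst g, snd g) \<in> P" unfolding P_def using that by (simp add: hull_inc)
    with convex_convex_hull show ?thesis
      unfolding x_def P_def by (rule inner_le_pair_potential_at_max[OF _ _ pP[unfolded P_def] p_max[unfolded P_def]])
  qed
  ultimately have "\<forall>g\<in>G. inner (x + snd g) (x - fst g) \<le> 0" by fastforce
  then show ?thesis ..
qed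

lemma inner_le_0_iff_mem_cball:
  fixes x a b :: "'a::real_inner"
  shows "inner (x + b) (x - a) \<le> 0 \<longleftrightarrow> x \<in> cball ((1/2) *\<^sub>R (a - b)) (norm (a + b) / 2)"
proof -
  have "(norm (x - (1/2) *\<^sub>R (a - b)))\<^sup>2 = inner (x + b) (x - a) + (norm (a + b) / 2)\<^sup>2"
    unfolding power2_norm_eq_inner power_divide
    by (simp add: inner_add_left inner_add_right inner_diff_left inner_diff_right inner_commute algebra_simps)
  then have "inner (x + b) (x - a) \<le> 0 \<longleftrightarrow> (norm (x - (1/2) *\<^sub>R (a - b)))\<^sup>2 \<le> (norm (a + b) / 2)\<^sup>2"
    by linarith
  also have "\<dots> \<longleftrightarrow> norm (x - (1/2) *\<^sub>R (a - b)) \<le> norm (a + b) / 2"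
    using power2_le_iff_abs_le[of "norm (a + b) / 2" "norm (x - (1/2) *\<^sub>R (a - b))"] by simp
  finally show ?thesis by (simp add: dist_norm norm_minus_commute)
qed

lemma monotone_op_related_point:
  fixes A :: "'a::{real_inner,complete_space} \<Rightarrow> 'a set"
  assumes mono: "monotone_op A" and "b0 \<in> A a0" "t > 0"
  shows "\<exists>x. \<forall>a b. b \<in> A a \<longrightarrow> 0 \<le> inner ((1/t) *\<^sub>R (w - x) - b) (x - a)"
proof -
  \<comment> \<open>Each K g is a closed ball, and finite intersections are nonempty by Debrunner--Flor.\<close>
  define K where "K g = {x. inner (x + (t *\<^sub>R snd g - w)) (x - fst g) \<le> 0}" for g
  have K_cball: "K g = cball ((1/2) *\<^sub>R (fst g - (t *\<^sub>R snd g - w))) (norm (fst g + (t *\<^sub>R snd g - w)) / 2)"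
    for g unfolding K_def by (rule set_eqI) (simp only: mem_Collect_eq inner_le_0_iff_mem_cball)
  define Gr where "Gr = {(a, b). b \<in> A a}"
  have "\<exists>x. \<forall>g\<in>Gr. x \<in> K g"
  proof (rule closed_convex_family_Inter_nonempty[of "(a0, b0)"])
    show "(a0, b0) \<in> Gr" using \<open>b0 \<in> A a0\<close> unfolding Gr_def by simp
    show "bounded (K (a0, b0))" "closed (K g)" "convex (K g)" for g unfolding K_cball by simp_all
  next
    fix F assume "finite F" "F \<subseteq> Gr"
    define F' where "F' = (\<lambda>g. (fst g, t *\<^sub>R snd g - w)) ` insert (a0, b0) F"
    have "\<exists>x. \<forall>g\<in>F'. inner (x + snd g) (x - fst g) \<le> 0"
    proof (rule debrunner_flor)
      show "finite F'" unfolding F'_def using \<open>finite F\<close> by simp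
      fix g g' assume "g \<in> F'" "g' \<in> F'"
      then obtain h h' where h: "h \<in> insert (a0, b0) F" "g = (fst h, t *\<^sub>R snd h - w)"
        and h': "h' \<in> insert (a0, b0) F" "g' = (fst h', t *\<^sub>R snd h' - w)"
        unfolding F'_def by (meson imageE)
      have "snd h \<in> A (fst h)" "snd h' \<in> A (fst h')"
        using h(1) h'(1) \<open>F \<subseteq> Gr\<close> \<open>b0 \<in> A a0\<close> unfolding Gr_def by auto
      then have "0 \<le> t * inner (fst h - fst h') (snd h - snd h')"
        using mono \<open>t > 0\<close> unfolding monotone_op_def by (simp add: inner_commute)
      then show "0 \<le> inner (fst g - fst g') (snd g - snd g')"
        unfolding h(2) h'(2) by (simp add: scaleR_diff_right[symmetric])
    qed
    then obtain x where x: "\<forall>g\<in>F'. inner (x + snd g) (x - fst g) \<le> 0" by blast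
    have "x \<in> K g" if "g \<in> insert (a0, b0) F" for g
    proof -
      have "(fst g, t *\<^sub>R snd g - w) \<in> F'" unfolding F'_def using that by (rule imageI)
      then show ?thesis using x unfolding K_def by fastforce
    qed
    then show "(\<Inter>g\<in>insert (a0, b0) F. K g) \<noteq> {}" by blast
  qed
  then obtain x where xK: "\<And>g. g \<in> Gr \<Longrightarrow> x \<in> K g" by blast
  have "0 \<le> inner ((1/t) *\<^sub>R (w - x) - b) (x - a)" if "b \<in> A a" for a b
  proof -
    have "0 \<le> inner (w - x - t *\<^sub>R b) (x - a)"
      using xK[of "(a, b)"] that unfolding Gr_def K_def by (simp add: inner_diff_left inner_add_left algebra_simps)
    then have "0 \<le> (1/t) * inner (w - x - t *\<^sub>R b) (x - a)" using \<open>t > 0\<close> by simp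
    moreover have "(1/t) *\<^sub>R (w - x - t *\<^sub>R b) = (1/t) *\<^sub>R (w - x) - b"
      using \<open>t > 0\<close> by (simp add: scaleR_diff_right)
    ultimately show ?thesis by (metis inner_scaleR_left)
  qed
  then show ?thesis by blast
qed

theorem minty:
  fixes A :: "'a::{real_inner,complete_space} \<Rightarrow> 'a set"
  assumes "max_monotone_op A" "t > 0"
  shows "resolvent t A w \<noteq> {}"
proof -
  obtain a0 b0 where "b0 \<in> A a0" using max_monotone_op_graph_nonempty[OF assms(1)] by blast
  moreover have "monotone_op A" using assms(1) unfolding max_monotone_op_def by simp
  ultimately obtain x where "\<forall>a b. b \<in> A a \<longrightarrow> 0 \<le> inner ((1/t) *\<^sub>R (w - x) - b) (x - a)"
    using monotone_op_related_point[OF _ _ assms(2)] by blast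
  then have "(1/t) *\<^sub>R (w - x) \<in> A x" by (intro max_monotone_op_memI[OF assms(1)]) blast
  moreover have "w = x + t *\<^sub>R ((1/t) *\<^sub>R (w - x))" using \<open>t > 0\<close> by simp
  ultimately show ?thesis unfolding resolvent_def by blast
qed

lemma resolvent_nonexpansive:
  fixes A :: "'a::real_inner \<Rightarrow> 'a set"
  assumes "monotone_op A" "t > 0" "p1 \<in> resolvent t A w1" "p2 \<in> resolvent t A w2"
  shows "norm (p1 - p2) \<le> norm (w1 - w2)"
proof -
  obtain u1 u2 where u: "u1 \<in> A p1" "u2 \<in> A p2" and w: "w1 = p1 + t *\<^sub>R u1" "w2 = p2 + t *\<^sub>R u2"
    using assms(3,4) unfolding resolvent_def by blast
  have "w1 - w2 = (p1 - p2) + t *\<^sub>R (u1 - u2)" unfolding w by (simp add: algebra_simps)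
  then have "inner (p1 - p2) (w1 - w2) = (norm (p1 - p2))\<^sup>2 + t * inner (u1 - u2) (p1 - p2)"
    by (simp add: inner_add_right power2_norm_eq_inner inner_commute)
  moreover have "0 \<le> inner (u1 - u2) (p1 - p2)" using assms(1) u unfolding monotone_op_def by blast
  ultimately have "(norm (p1 - p2))\<^sup>2 \<le> norm (p1 - p2) * norm (w1 - w2)"
    using assms(2) norm_cauchy_schwarz[of "p1 - p2" "w1 - w2"] by (smt (verit) mult_nonneg_nonneg)
  then show ?thesis
    by (cases "p1 = p2") (auto simp: power2_eq_square mult_le_cancel_left_pos)
qed

lemma resolvent_lipschitz_fixed_point:
  fixes A :: "'a::{real_inner,complete_space} \<Rightarrow> 'a set"
  assumes "max_monotone_op A" "K-lipschitz_on UNIV T" "0 < t" "t * K < 1"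
  shows "\<exists>x. x \<in> resolvent t A (w - t *\<^sub>R T x)"
proof -
  have mono: "monotone_op A" using assms(1) unfolding max_monotone_op_def by simp
  have "0 \<le> K" and T_lip: "\<And>a b. dist (T a) (T b) \<le> K * dist a b"
    using assms(2) unfolding lipschitz_on_def by auto
  define J where "J v = (SOME p. p \<in> resolvent t A v)" for v
  have J: "J v \<in> resolvent t A v" for v
    unfolding J_def using minty[OF assms(1,3)] by (simp add: some_in_eq)
  define \<Phi> where "\<Phi> x = J (w - t *\<^sub>R T x)" for x
  have "dist (\<Phi> x) (\<Phi> y) \<le> (t * K) * dist x y" for x y
  proof -
    have "dist (\<Phi> x) (\<Phi> y) \<le> norm ((w - t *\<^sub>R T x) - (w - t *\<^sub>R T y))"
      unfolding \<Phi>_def dist_norm by (rule resolvent_nonexpansive[OF mono \<open>0 < t\<close> J J])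
    also have "\<dots> = norm (t *\<^sub>R (T y - T x))" by (simp add: algebra_simps)
    also have "\<dots> = t * dist (T y) (T x)" using \<open>0 < t\<close> by (simp add: dist_norm)
    also have "\<dots> \<le> t * (K * dist x y)" using T_lip[of y x] \<open>0 < t\<close> by (simp add: dist_commute)
    finally show ?thesis by simp
  qed
  moreover have "0 \<le> t * K" using \<open>0 < t\<close> \<open>0 \<le> K\<close> by simp
  ultimately obtain x where "\<Phi> x = x" using banach_fix_type[OF _ \<open>t * K < 1\<close>] by blast
  then show ?thesis using J unfolding \<Phi>_def by metis
qed

theorem max_monotone_op_plus_lipschitz:
  fixes A :: "'a::{real_inner,complete_space} \<Rightarrow> 'a set"
  assumes "max_monotone_op A" "monotone_op (sv T)" "K-lipschitz_on UNIV T"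
  shows "max_monotone_op (op_plus A (sv T))"
  unfolding max_monotone_op_def
proof (intro conjI allI impI)
  have mono: "monotone_op A" using assms(1) unfolding max_monotone_op_def by simp
  then show "monotone_op (op_plus A (sv T))" using assms(2) by (rule monotone_op_plus_sv)
  have "0 \<le> K" using assms(3) unfolding lipschitz_on_def by simp
  define t where "t = 1 / (2 * K + 2)"
  have "0 < t" "t * K < 1" unfolding t_def using \<open>0 \<le> K\<close> by (simp_all add: field_simps)
  fix A' assume A': "monotone_op A' \<and> (\<forall>x. op_plus A (sv T) x \<subseteq> A' x)"
  have "f \<in> op_plus A (sv T) q" if "f \<in> A' q" for f q
  proof -
    obtain x where "x \<in> resolvent t A (q + t *\<^sub>R f - t *\<^sub>R T x)"
      using resolvent_lipschitz_fixed_point[OF assms(1,3) \<open>0 < t\<close> \<open>t * K < 1\<close>] by blast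
    then obtain u where u: "u \<in> A x" and ue: "q + t *\<^sub>R f - t *\<^sub>R T x = x + t *\<^sub>R u"
      unfolding resolvent_def by blast
    \<comment> \<open>Monotonicity of the extension against the point (x, u + T x) forces x = q.\<close>
    have "u + T x \<in> op_plus A (sv T) x" using u by (simp add: mem_op_plus_sv_iff)
    then have "u + T x \<in> A' x" using A' by blast
    then have "0 \<le> inner (f - (u + T x)) (q - x)" using A' that unfolding monotone_op_def by blast
    moreover have tf: "t *\<^sub>R (f - (u + T x)) = x - q" using ue by (simp add: algebra_simps)
    moreover have "inner (x - q) (q - x) = - inner (x - q) (x - q)"
      by (metis inner_minus_right minus_diff_eq)
    ultimately have "inner (x - q) (x - q) \<le> 0"
      using \<open>0 < t\<close> by (metis inner_scaleR_left neg_0_le_iff_le zero_le_mult_iff less_imp_le)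
    then have "x = q" using inner_ge_zero[of "x - q"] by simp
    then show ?thesis using tf \<open>0 < t\<close> u by (simp add: mem_op_plus_sv_iff)
  qed
  then show "A' = op_plus A (sv T)" using A' by (intro ext) blast
qed

lemma max_monotone_op_weak_strong_closed:
  assumes "max_monotone_op M" and "\<And>k. s k \<in> M (y k)"
    and "weakly_converges y q" "bounded (range y)" "s \<longlonglongrightarrow> 0"
  shows "0 \<in> M q"
proof (rule max_monotone_op_memI[OF assms(1)])
  fix a b assume "b \<in> M a"
  then have nonneg: "0 \<le> inner (s k - b) (y k - a)" for k
    using assms(1,2) unfolding max_monotone_op_def monotone_op_def by blast
  obtain B where B: "\<And>k. norm (y k) \<le> B" using assms(4) unfolding bounded_iff by blast
  have "(\<lambda>k. inner (s k) (y k)) \<longlonglongrightarrow> 0"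
  proof (rule Lim_null_comparison)
    show "\<forall>\<^sub>F k in sequentially. norm (inner (s k) (y k)) \<le> norm (s k) * B"
      using order_trans[OF Cauchy_Schwarz_ineq2 mult_left_mono[OF B norm_ge_zero]] by simp
    show "(\<lambda>k. norm (s k) * B) \<longlonglongrightarrow> 0"
      using tendsto_mult_left_zero[OF tendsto_norm_zero[OF assms(5)]] .
  qed
  moreover have "(\<lambda>k. inner (s k) a) \<longlonglongrightarrow> 0" using tendsto_inner[OF assms(5) tendsto_const] by simp
  moreover have "(\<lambda>k. inner (y k) b) \<longlonglongrightarrow> inner q b" using assms(3) unfolding weakly_converges_def ..
  ultimately have "(\<lambda>k. inner (s k) (y k) - inner (s k) a - inner (y k) b + inner b a)
      \<longlonglongrightarrow> 0 - 0 - inner q b + inner b a"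
    by (intro tendsto_add tendsto_diff tendsto_const)
  moreover have "inner (s k - b) (y k - a) = inner (s k) (y k) - inner (s k) a - inner (y k) b + inner b a" for k
    by (simp add: inner_diff_left inner_diff_right inner_commute)
  ultimately have "(\<lambda>k. inner (s k - b) (y k - a)) \<longlonglongrightarrow> 0 - 0 - inner q b + inner b a" by simp
  then have "0 \<le> 0 - 0 - inner q b + inner b a" by (rule LIMSEQ_le_const) (use nonneg in blast)
  then show "0 \<le> inner (0 - b) (q - a)" by (simp add: inner_diff_right inner_commute)
qed

section \<open>Convergence of the splitting iteration\<close>

lemma cocoercive_cross_term_bound:
  fixes c X Y z :: "'a::real_inner"
  assumes coco: "inverse \<beta> * (norm c)\<^sup>2 \<le> inner c (X - z)" and "\<beta> > 0" "\<gamma> > 0"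
  shows "- 2 * \<gamma> * inner c (Y - z) \<le> \<gamma> * \<beta> / 2 * (norm (X - Y))\<^sup>2"
proof -
  have "inner c (Y - z) = inner c (X - z) - inner c (X - Y)" by (simp add: inner_diff_right)
  moreover have "inner c (X - Y) \<le> norm c * norm (X - Y)" by (rule norm_cauchy_schwarz)
  moreover have "2 * norm c * norm (X - Y) - 2 * (norm c)\<^sup>2 / \<beta> \<le> \<beta> / 2 * (norm (X - Y))\<^sup>2"
  proof -
    have "\<beta> / 2 * (norm (X - Y))\<^sup>2 - (2 * norm c * norm (X - Y) - 2 * (norm c)\<^sup>2 / \<beta>)
        = (\<beta> * norm (X - Y) - 2 * norm c)\<^sup>2 / (2 * \<beta>)"
      using \<open>\<beta> > 0\<close> by (simp add: field_simps power2_eq_square)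
    then show ?thesis using \<open>\<beta> > 0\<close> by (smt (verit) divide_nonneg_pos zero_le_power2)
  qed
  ultimately have "- 2 * inner c (Y - z) \<le> \<beta> / 2 * (norm (X - Y))\<^sup>2"
    using coco by (simp add: field_simps)
  then have "\<gamma> * (- 2 * inner c (Y - z)) \<le> \<gamma> * (\<beta> / 2 * (norm (X - Y))\<^sup>2)"
    using \<open>\<gamma> > 0\<close> by (intro mult_left_mono) auto
  then show ?thesis by (simp add: algebra_simps)
qed

lemma reflected_term_bound:
  fixes a V X Xp Yp :: "'a::real_inner"
  assumes near: "norm (X - Yp) \<le> \<gamma> * \<mu> * norm (Xp - Yp)" and a: "norm a \<le> L * norm (Xp - Yp)"
    and "0 \<le> \<gamma>" "0 \<le> L"
  shows "2 * \<gamma> * \<bar>inner a (V - Yp)\<bar> \<le> \<gamma> * L * (norm (V - X))\<^sup>2 + (\<gamma> * L + 2 * \<gamma>\<^sup>2 * L * \<mu>) * (norm (Xp - Yp))\<^sup>2"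
proof -
  define e where "e = norm (Xp - Yp)"
  define v where "v = norm (V - X)"
  have "norm (V - Yp) \<le> v + \<gamma> * \<mu> * e"
    using norm_triangle_ineq[of "V - X" "X - Yp"] near unfolding v_def e_def by simp
  then have "\<bar>inner a (V - Yp)\<bar> \<le> (L * e) * (v + \<gamma> * \<mu> * e)"
    using order_trans[OF Cauchy_Schwarz_ineq2 mult_mono[OF a]] \<open>0 \<le> L\<close> unfolding e_def by simp
  then have "2 * \<gamma> * \<bar>inner a (V - Yp)\<bar> \<le> 2 * \<gamma> * ((L * e) * (v + \<gamma> * \<mu> * e))"
    using \<open>0 \<le> \<gamma>\<close> by (intro mult_left_mono) auto
  also have "\<dots> = \<gamma> * L * (2 * (e * v)) + 2 * \<gamma>\<^sup>2 * L * \<mu> * e\<^sup>2"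
    by (simp add: algebra_simps power2_eq_square)
  also have "\<dots> \<le> \<gamma> * L * (e\<^sup>2 + v\<^sup>2) + 2 * \<gamma>\<^sup>2 * L * \<mu> * e\<^sup>2"
    using sum_squares_bound[of e v] \<open>0 \<le> \<gamma>\<close> \<open>0 \<le> L\<close> by (simp add: mult_left_mono)
  finally show ?thesis unfolding e_def v_def by (simp add: algebra_simps)
qed

locale splitting_iteration =
  fixes A1 :: "'a::{real_inner,complete_space} \<Rightarrow> 'a set"
    and A2 B C :: "'a \<Rightarrow> 'a"
    and L \<mu> \<beta> \<gamma> \<epsilon> :: real
    and xm1 ym1 :: 'a
    and x y :: "nat \<Rightarrow> 'a"
  assumes A2_lipschitz: "L-lipschitz_on UNIV A2"
    and A12_max_monotone: "max_monotone_op (op_plus A1 (sv A2))"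
    and B_monotone: "monotone_op (sv B)"
    and B_lipschitz: "\<mu>-lipschitz_on UNIV B"
    and \<beta>_pos: "\<beta> > 0"
    and C_cocoercive: "cocoercive (inverse \<beta>) C"
    and \<gamma>_pos: "\<gamma> > 0" and \<epsilon>_pos: "\<epsilon> > 0"
    and step_size: "1 - 2*\<gamma>*L - 2*\<gamma>^2*L*\<mu> - \<gamma>^2*\<mu>^2 - \<gamma>*\<beta>/2 \<ge> \<epsilon>"
    and y_step: "\<And>k. y k \<in> resolvent \<gamma> A1
        (x k - \<gamma> *\<^sub>R A2 (x k) - \<gamma> *\<^sub>R B (x k) - \<gamma> *\<^sub>R C (x k)
         - \<gamma> *\<^sub>R (A2 (if k = 0 then ym1 else y (k - 1)) - A2 (if k = 0 then xm1 else x (k - 1))))"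
    and x_step: "\<And>k. x (Suc k) = y k - \<gamma> *\<^sub>R B (y k) + \<gamma> *\<^sub>R B (x k)"
begin

abbreviation A12 where "A12 \<equiv> op_plus A1 (sv A2)"

abbreviation M where "M \<equiv> op_plus (op_plus A12 (sv B)) (sv C)"

definition d :: "nat \<Rightarrow> 'a" where "d k = x k - y k"

lemma A2_lip: "norm (A2 a - A2 b) \<le> L * norm (a - b)" and L_nonneg: "0 \<le> L"
  using A2_lipschitz unfolding lipschitz_on_def dist_norm by auto

lemma B_lip: "norm (B a - B b) \<le> \<mu> * norm (a - b)" and \<mu>_nonneg: "0 \<le> \<mu>"
  using B_lipschitz unfolding lipschitz_on_def dist_norm by auto

lemma C_lipschitz: "\<beta>-lipschitz_on UNIV C"
  using cocoercive_imp_lipschitz[OF _ C_cocoercive] \<beta>_pos by simp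

lemma C_lip: "norm (C a - C b) \<le> \<beta> * norm (a - b)"
  using C_lipschitz unfolding lipschitz_on_def dist_norm by auto

lemma M_max_monotone: "max_monotone_op M"
proof -
  have "monotone_op (sv C)" using cocoercive_imp_monotone_op[OF _ C_cocoercive] \<beta>_pos by simp
  then show ?thesis
    by (intro max_monotone_op_plus_lipschitz[OF _ _ C_lipschitz]
        max_monotone_op_plus_lipschitz[OF A12_max_monotone B_monotone B_lipschitz])
qed

lemma zer_M_iff: "z \<in> zer M \<longleftrightarrow> - B z - C z \<in> A12 z"
proof -
  have "- C z - B z = - B z - C z" by simp
  then show ?thesis unfolding zer_def mem_Collect_eq mem_op_plus_sv_iff diff_0 by metis
qed

lemma \<gamma>L_less: "\<gamma> * L < 1/2"
proof -
  have "0 \<le> 2 * \<gamma>^2 * L * \<mu>" using L_nonneg \<mu>_nonneg by simp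
  moreover have "0 < \<gamma> * \<beta> / 2" using \<gamma>_pos \<beta>_pos by simp
  moreover have "0 \<le> \<gamma>^2 * \<mu>^2" by simp
  ultimately show ?thesis using step_size \<epsilon>_pos by linarith
qed

text \<open>The element of (A1 + A2)(y k) realised by the resolvent step.\<close>

definition u :: "nat \<Rightarrow> 'a" where
  "u k = (SOME w. w \<in> A1 (y k) \<and> x k - \<gamma> *\<^sub>R A2 (x k) - \<gamma> *\<^sub>R B (x k) - \<gamma> *\<^sub>R C (x k)
     - \<gamma> *\<^sub>R (A2 (if k = 0 then ym1 else y (k - 1)) - A2 (if k = 0 then xm1 else x (k - 1)))
     = y k + \<gamma> *\<^sub>R w) + A2 (y k)"

lemma u_mem: "u k \<in> A12 (y k)"
  and u_step: "\<gamma> *\<^sub>R u (Suc k) = d (Suc k) - \<gamma> *\<^sub>R B (x (Suc k)) - \<gamma> *\<^sub>R C (x (Suc k))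
      + \<gamma> *\<^sub>R (A2 (y (Suc k)) - A2 (x (Suc k))) - \<gamma> *\<^sub>R (A2 (y k) - A2 (x k))"
proof -
  have "\<exists>w. w \<in> A1 (y k) \<and> x k - \<gamma> *\<^sub>R A2 (x k) - \<gamma> *\<^sub>R B (x k) - \<gamma> *\<^sub>R C (x k)
     - \<gamma> *\<^sub>R (A2 (if k = 0 then ym1 else y (k - 1)) - A2 (if k = 0 then xm1 else x (k - 1)))
     = y k + \<gamma> *\<^sub>R w" for k
    using y_step[of k] unfolding resolvent_def by blast
  note w = someI_ex[OF this]
  show "u k \<in> A12 (y k)" using w[of k] unfolding u_def by (simp add: mem_op_plus_sv_iff)
  show "\<gamma> *\<^sub>R u (Suc k) = d (Suc k) - \<gamma> *\<^sub>R B (x (Suc k)) - \<gamma> *\<^sub>R C (x (Suc k))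
      + \<gamma> *\<^sub>R (A2 (y (Suc k)) - A2 (x (Suc k))) - \<gamma> *\<^sub>R (A2 (y k) - A2 (x k))"
    using conjunct2[OF w[of "Suc k"]] unfolding u_def d_def by (simp add: algebra_simps)
qed

lemma x_near_y: "norm (x (Suc k) - y k) \<le> \<gamma> * \<mu> * norm (d k)"
proof -
  have "x (Suc k) - y k = \<gamma> *\<^sub>R (B (x k) - B (y k))" unfolding x_step by (simp add: algebra_simps)
  then show ?thesis using B_lip[of "x k" "y k"] \<gamma>_pos unfolding d_def by simp
qed

definition lyap :: "'a \<Rightarrow> nat \<Rightarrow> real" where
  "lyap z n = (norm (x (Suc n) - z))\<^sup>2 - 2 * \<gamma> * inner (A2 (y n) - A2 (x n)) (y n - z)
     + (\<gamma> * L + 2 * \<gamma>\<^sup>2 * L * \<mu>) * (norm (d n))\<^sup>2"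

lemma step_monotone_bound:
  assumes "z \<in> zer M"
  shows "\<gamma> * inner (C (x (Suc n)) - C z) (y (Suc n) - z)
      - \<gamma> * inner ((A2 (y (Suc n)) - A2 (x (Suc n))) - (A2 (y n) - A2 (x n))) (y (Suc n) - z)
    \<le> inner (x (Suc n) - x (Suc (Suc n))) (y (Suc n) - z)"
proof -
  \<comment> \<open>The step difference splits into an element of A12 minus the one at z, a B-difference,
    a C-difference and the A2 correction; the first two pair nonnegatively with y - z.\<close>
  have "x (Suc n) - x (Suc (Suc n)) = \<gamma> *\<^sub>R (u (Suc n) - (- B z - C z)) + \<gamma> *\<^sub>R (B (y (Suc n)) - B z)
      + \<gamma> *\<^sub>R (C (x (Suc n)) - C z) - \<gamma> *\<^sub>R ((A2 (y (Suc n)) - A2 (x (Suc n))) - (A2 (y n) - A2 (x n)))"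
    using u_step[of n] unfolding x_step[of "Suc n"] d_def by (simp add: algebra_simps)
  moreover have "0 \<le> inner (u (Suc n) - (- B z - C z)) (y (Suc n) - z)"
    using A12_max_monotone u_mem assms unfolding zer_M_iff max_monotone_op_def monotone_op_def by blast
  moreover have "0 \<le> inner (B (y (Suc n)) - B z) (y (Suc n) - z)"
    using B_monotone unfolding monotone_op_def sv_def by blast
  ultimately show ?thesis using \<gamma>_pos by (simp add: inner_add_left inner_diff_left)
qed

lemma lyap_descent:
  assumes "z \<in> zer M"
  shows "lyap z (Suc n) \<le> lyap z n - \<epsilon> * (norm (d (Suc n)))\<^sup>2"
proof -
  define X where "X = x (Suc n)"
  define Y where "Y = y (Suc n)"
  define X' where "X' = x (Suc (Suc n))"
  define Xp where "Xp = x n"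
  define Yp where "Yp = y n"
  define ak where "ak = A2 Y - A2 X"
  define an where "an = A2 Yp - A2 Xp"
  define e where "e = \<gamma> *\<^sub>R (B Y - B X)"
  define c1 where "c1 = \<gamma> * L + 2 * \<gamma>\<^sup>2 * L * \<mu>"
  have X': "X' = Y - e" unfolding X'_def e_def X_def Y_def x_step by (simp add: algebra_simps)
  have expand: "(norm (X' - z))\<^sup>2 = (norm (X - z))\<^sup>2 - (norm (X - Y))\<^sup>2 + (norm e)\<^sup>2 - 2 * inner (X - X') (Y - z)"
    unfolding X' power2_norm_eq_inner
    by (simp add: inner_add_left inner_add_right inner_diff_left inner_diff_right inner_commute algebra_simps)
  have monotone_terms: "\<gamma> * inner (C X - C z) (Y - z) - \<gamma> * inner (ak - an) (Y - z) \<le> inner (X - X') (Y - z)"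
    using step_monotone_bound[OF assms, of n] unfolding X_def Y_def X'_def ak_def an_def Xp_def Yp_def .
  have B_term: "(norm e)\<^sup>2 \<le> \<gamma>\<^sup>2 * \<mu>\<^sup>2 * (norm (X - Y))\<^sup>2"
  proof -
    have "norm e \<le> \<gamma> * \<mu> * norm (X - Y)"
      using B_lip[of Y X] \<gamma>_pos unfolding e_def by (simp add: norm_minus_commute)
    then have "(norm e)\<^sup>2 \<le> (\<gamma> * \<mu> * norm (X - Y))\<^sup>2" by (simp add: power_mono)
    then show ?thesis by (simp add: power_mult_distrib)
  qed
  have C_term: "- 2 * \<gamma> * inner (C X - C z) (Y - z) \<le> \<gamma> * \<beta> / 2 * (norm (X - Y))\<^sup>2"
    using C_cocoercive \<beta>_pos \<gamma>_pos unfolding cocoercive_def by (intro cocoercive_cross_term_bound) auto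
  \<comment> \<open>The A2 correction telescopes into the Lyapunov function up to the reflected term.\<close>
  have "2 * \<gamma> * inner (ak - an) (Y - z)
      = 2 * \<gamma> * inner ak (Y - z) - 2 * \<gamma> * inner an (Yp - z) - 2 * \<gamma> * inner an (Y - Yp)"
    by (simp add: inner_diff_left inner_diff_right algebra_simps)
  moreover have "- (2 * \<gamma> * inner an (Y - Yp)) \<le> 2 * \<gamma> * \<bar>inner an (Y - Yp)\<bar>"
    using \<gamma>_pos by (simp add: abs_if)
  moreover have "2 * \<gamma> * \<bar>inner an (Y - Yp)\<bar> \<le> \<gamma> * L * (norm (X - Y))\<^sup>2 + c1 * (norm (Xp - Yp))\<^sup>2"
    using reflected_term_bound[of X Yp \<gamma> \<mu> Xp an L Y] x_near_y[of n] A2_lip[of Yp Xp] \<gamma>_pos L_nonneg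
    unfolding X_def Xp_def Yp_def an_def c1_def d_def by (simp add: norm_minus_commute)
  ultimately have A2_term: "2 * \<gamma> * inner (ak - an) (Y - z) \<le> 2 * \<gamma> * inner ak (Y - z) - 2 * \<gamma> * inner an (Yp - z)
      + \<gamma> * L * (norm (X - Y))\<^sup>2 + c1 * (norm (Xp - Yp))\<^sup>2"
    by linarith
  have "\<epsilon> \<le> 1 - \<gamma>\<^sup>2 * \<mu>\<^sup>2 - \<gamma> * \<beta> / 2 - \<gamma> * L - c1" using step_size unfolding c1_def by linarith
  then have "\<epsilon> * (norm (X - Y))\<^sup>2 \<le> (1 - \<gamma>\<^sup>2 * \<mu>\<^sup>2 - \<gamma> * \<beta> / 2 - \<gamma> * L - c1) * (norm (X - Y))\<^sup>2"
    by (intro mult_right_mono) auto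
  then show ?thesis
    using expand monotone_terms B_term C_term A2_term
    unfolding lyap_def c1_def d_def X_def Y_def X'_def Xp_def Yp_def ak_def an_def
    by (simp add: algebra_simps)
qed

lemma lyap_lower: "(norm (x (Suc n) - z))\<^sup>2 / 2 \<le> lyap z n"
proof -
  define a where "a = A2 (y n) - A2 (x n)"
  have "2 * \<gamma> * \<bar>inner a (z - y n)\<bar>
      \<le> \<gamma> * L * (norm (x (Suc n) - z))\<^sup>2 + (\<gamma> * L + 2 * \<gamma>\<^sup>2 * L * \<mu>) * (norm (d n))\<^sup>2"
    using reflected_term_bound[OF x_near_y[of n, unfolded d_def]] A2_lip[of "y n" "x n"] \<gamma>_pos L_nonneg
    unfolding a_def d_def by (simp add: norm_minus_commute)
  moreover have "- (2 * \<gamma> * inner a (y n - z)) = 2 * \<gamma> * inner a (z - y n)"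
    by (simp add: inner_diff_right algebra_simps)
  moreover have "2 * \<gamma> * (- \<bar>inner a (z - y n)\<bar>) \<le> 2 * \<gamma> * inner a (z - y n)"
    using \<gamma>_pos by (intro mult_left_mono) auto
  moreover have "\<gamma> * L * (norm (x (Suc n) - z))\<^sup>2 \<le> 1/2 * (norm (x (Suc n) - z))\<^sup>2"
    using \<gamma>L_less by (intro mult_right_mono) auto
  ultimately show ?thesis unfolding lyap_def a_def[symmetric] by linarith
qed

lemma lyap_decseq:
  assumes "z \<in> zer M"
  shows "decseq (lyap z)"
proof (rule decseq_SucI)
  fix n
  have "0 \<le> \<epsilon> * (norm (d (Suc n)))\<^sup>2" using \<epsilon>_pos by simp
  then show "lyap z (Suc n) \<le> lyap z n" using lyap_descent[OF assms, of n] by linarith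
qed

lemma lyap_convergent:
  assumes "z \<in> zer M"
  shows "convergent (lyap z)"
proof -
  have "0 \<le> lyap z n" for n by (rule order_trans[OF _ lyap_lower]) simp
  then have "\<forall>n. 0 \<le> lyap z n" ..
  then obtain l where "lyap z \<longlonglongrightarrow> l" by (rule decseq_convergent[OF lyap_decseq[OF assms]])
  then show ?thesis unfolding convergent_def ..
qed

lemma d_tendsto_zero:
  assumes "zer M \<noteq> {}"
  shows "d \<longlonglongrightarrow> 0"
proof -
  obtain z where z: "z \<in> zer M" using assms by blast
  then obtain l where l: "lyap z \<longlonglongrightarrow> l" using lyap_convergent unfolding convergent_def by blast
  have "(\<lambda>n. (lyap z n - lyap z (Suc n)) / \<epsilon>) \<longlonglongrightarrow> (l - l) / \<epsilon>"
    using tendsto_divide[OF tendsto_diff[OF l LIMSEQ_Suc[OF l]] tendsto_const, of \<epsilon>] \<epsilon>_pos by simp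
  then have gap: "(\<lambda>n. (lyap z n - lyap z (Suc n)) / \<epsilon>) \<longlonglongrightarrow> 0" by simp
  have "(\<lambda>n. (norm (d (Suc n)))\<^sup>2) \<longlonglongrightarrow> 0"
  proof (rule real_tendsto_sandwich[OF _ _ tendsto_const gap])
    have "(norm (d (Suc n)))\<^sup>2 \<le> (lyap z n - lyap z (Suc n)) / \<epsilon>" for n
      using lyap_descent[OF z, of n] \<epsilon>_pos by (simp add: le_divide_eq mult.commute)
    then show "\<forall>\<^sub>F n in sequentially. (norm (d (Suc n)))\<^sup>2 \<le> (lyap z n - lyap z (Suc n)) / \<epsilon>" by simp
  qed simp
  then have "(\<lambda>n. sqrt ((norm (d (Suc n)))\<^sup>2)) \<longlonglongrightarrow> sqrt 0" by (rule tendsto_real_sqrt)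
  then have "(\<lambda>n. norm (d (Suc n))) \<longlonglongrightarrow> 0" by simp
  then have "(\<lambda>n. norm (d n)) \<longlonglongrightarrow> 0" by (rule LIMSEQ_imp_Suc)
  then show ?thesis by (simp add: tendsto_norm_zero_iff)
qed

lemma x_bounded:
  assumes "zer M \<noteq> {}"
  shows "bounded (range x)"
proof -
  obtain z where z: "z \<in> zer M" using assms by blast
  define R where "R = max (norm (x 0 - z)) (sqrt (2 * lyap z 0))"
  have "norm (x k - z) \<le> R" for k
  proof (cases k)
    case (Suc n)
    have "(norm (x (Suc n) - z))\<^sup>2 \<le> 2 * lyap z 0"
      using lyap_lower[of n z] decseqD[OF lyap_decseq[OF z], of 0 n] by simp
    then have "norm (x (Suc n) - z) \<le> sqrt (2 * lyap z 0)" by (rule real_le_rsqrt)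
    then show ?thesis unfolding R_def Suc by (simp add: le_max_iff_disj)
  qed (simp add: R_def)
  then have "range x \<subseteq> cball z R" by (auto simp: dist_norm norm_minus_commute)
  then show ?thesis using bounded_subset bounded_cball by blast
qed

lemma y_bounded: "zer M \<noteq> {} \<Longrightarrow> bounded (range y)"
  using bounded_minus_comp[OF x_bounded convergent_imp_bounded[OF d_tendsto_zero]]
  unfolding d_def by simp

lemma lyap_minus_dist_sq_tendsto_zero:
  assumes "z \<in> zer M"
  shows "(\<lambda>n. lyap z n - (norm (x (Suc n) - z))\<^sup>2) \<longlonglongrightarrow> 0"
proof -
  obtain K0 where K0: "\<And>n. norm (y n) \<le> K0" using y_bounded assms unfolding bounded_iff by blast
  define K where "K = K0 + norm z"
  have K: "norm (y n - z) \<le> K" for n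
    using norm_triangle_ineq4[of "y n" z] K0[of n] unfolding K_def by linarith
  have "zer M \<noteq> {}" using assms by blast
  note d0 = tendsto_norm_zero[OF d_tendsto_zero[OF this]]
  define c1 where "c1 = \<gamma> * L + 2 * \<gamma>\<^sup>2 * L * \<mu>"
  have "0 \<le> c1" unfolding c1_def using \<gamma>_pos L_nonneg \<mu>_nonneg by simp
  define rem where "rem n = - 2 * \<gamma> * inner (A2 (y n) - A2 (x n)) (y n - z) + c1 * (norm (d n))\<^sup>2" for n
  have bound: "norm (rem n) \<le> 2 * \<gamma> * (L * norm (d n) * K) + c1 * (norm (d n))\<^sup>2" for n
  proof -
    have "\<bar>inner (A2 (y n) - A2 (x n)) (y n - z)\<bar> \<le> L * norm (d n) * K"
      using order_trans[OF Cauchy_Schwarz_ineq2 mult_mono[OF A2_lip[of "y n" "x n"] K[of n]]] L_nonneg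
      unfolding d_def by (simp add: norm_minus_commute)
    then have "2 * \<gamma> * \<bar>inner (A2 (y n) - A2 (x n)) (y n - z)\<bar> \<le> 2 * \<gamma> * (L * norm (d n) * K)"
      using \<gamma>_pos by (intro mult_left_mono) auto
    moreover have "\<bar>rem n\<bar> \<le> 2 * \<gamma> * \<bar>inner (A2 (y n) - A2 (x n)) (y n - z)\<bar> + c1 * (norm (d n))\<^sup>2"
      unfolding rem_def
      using abs_triangle_ineq[of "- 2 * \<gamma> * inner (A2 (y n) - A2 (x n)) (y n - z)" "c1 * (norm (d n))\<^sup>2"]
        \<gamma>_pos \<open>0 \<le> c1\<close> by (simp add: abs_mult)
    ultimately show ?thesis by simp
  qed
  have "rem \<longlonglongrightarrow> 0"
  proof (rule Lim_null_comparison)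
    show "\<forall>\<^sub>F n in sequentially. norm (rem n) \<le> 2 * \<gamma> * (L * norm (d n) * K) + c1 * (norm (d n))\<^sup>2"
      using bound by simp
    have "(\<lambda>n. 2 * \<gamma> * (L * norm (d n) * K) + c1 * (norm (d n))\<^sup>2) \<longlonglongrightarrow> 2 * \<gamma> * (L * 0 * K) + c1 * 0\<^sup>2"
      by (intro tendsto_add tendsto_mult_left tendsto_mult_right tendsto_power d0)
    then show "(\<lambda>n. 2 * \<gamma> * (L * norm (d n) * K) + c1 * (norm (d n))\<^sup>2) \<longlonglongrightarrow> 0" by simp
  qed
  then show ?thesis unfolding lyap_def rem_def c1_def by simp
qed

lemma dist_sq_convergent:
  assumes "z \<in> zer M"
  shows "convergent (\<lambda>k. (norm (x k - z))\<^sup>2)"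
proof -
  obtain l where "lyap z \<longlonglongrightarrow> l" using lyap_convergent[OF assms] unfolding convergent_def by blast
  then have "(\<lambda>n. lyap z n - (lyap z n - (norm (x (Suc n) - z))\<^sup>2)) \<longlonglongrightarrow> l - 0"
    by (rule tendsto_diff[OF _ lyap_minus_dist_sq_tendsto_zero[OF assms]])
  then have "(\<lambda>n. (norm (x (Suc n) - z))\<^sup>2) \<longlonglongrightarrow> l" by simp
  then have "(\<lambda>n. (norm (x n - z))\<^sup>2) \<longlonglongrightarrow> l" by (rule LIMSEQ_imp_Suc)
  then show ?thesis unfolding convergent_def by blast
qed

definition v :: "nat \<Rightarrow> 'a" where "v k = u k + B (y k) + C (y k)"

lemma v_mem: "v k \<in> M (y k)"
  using u_mem[of k] unfolding v_def by (simp add: mem_op_plus_sv_iff)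

lemma v_tendsto_zero:
  assumes "zer M \<noteq> {}"
  shows "v \<longlonglongrightarrow> 0"
proof -
  note d0 = tendsto_norm_zero[OF d_tendsto_zero[OF assms]]
  define a b c e f where "a n = (1/\<gamma>) *\<^sub>R d (Suc n)" and "b n = B (y (Suc n)) - B (x (Suc n))"
    and "c n = C (y (Suc n)) - C (x (Suc n))" and "e n = A2 (y (Suc n)) - A2 (x (Suc n))"
    and "f n = A2 (y n) - A2 (x n)" for n
  have v_split: "v (Suc n) = a n + b n + c n + e n - f n" for n
  proof -
    have "u (Suc n) = (1/\<gamma>) *\<^sub>R (\<gamma> *\<^sub>R u (Suc n))" using \<gamma>_pos by simp
    then show ?thesis unfolding v_def a_def b_def c_def e_def f_def u_step
      using \<gamma>_pos by (simp add: scaleR_diff_right scaleR_add_right algebra_simps)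
  qed
  have triangle: "norm (v (Suc n)) \<le> norm (a n) + norm (b n) + norm (c n) + norm (e n) + norm (f n)" for n
    unfolding v_split using norm_triangle_ineq4[of "a n + b n + c n + e n" "f n"] norm_triangle_ineq[of "a n + b n + c n" "e n"]
      norm_triangle_ineq[of "a n + b n" "c n"] norm_triangle_ineq[of "a n" "b n"] by linarith
  have a_norm: "norm (a n) = 1/\<gamma> * norm (d (Suc n))" for n using \<gamma>_pos unfolding a_def by simp
  have lip: "norm (b n) \<le> \<mu> * norm (d (Suc n))" "norm (c n) \<le> \<beta> * norm (d (Suc n))"
    "norm (e n) \<le> L * norm (d (Suc n))" "norm (f n) \<le> L * norm (d n)" for n
    using B_lip[of "y (Suc n)" "x (Suc n)"] C_lip[of "y (Suc n)" "x (Suc n)"]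
      A2_lip[of "y (Suc n)" "x (Suc n)"] A2_lip[of "y n" "x n"]
    unfolding b_def c_def e_def f_def d_def by (simp_all add: norm_minus_commute)
  have bound: "norm (v (Suc n)) \<le> 1/\<gamma> * norm (d (Suc n)) + \<mu> * norm (d (Suc n))
      + \<beta> * norm (d (Suc n)) + L * norm (d (Suc n)) + L * norm (d n)" for n
    using triangle[of n] a_norm[of n] lip[of n] by linarith
  have "(\<lambda>n. v (Suc n)) \<longlonglongrightarrow> 0"
  proof (rule Lim_null_comparison)
    show "\<forall>\<^sub>F n in sequentially. norm (v (Suc n)) \<le> 1/\<gamma> * norm (d (Suc n)) + \<mu> * norm (d (Suc n))
      + \<beta> * norm (d (Suc n)) + L * norm (d (Suc n)) + L * norm (d n)" using bound by simp
    have "(\<lambda>n. 1/\<gamma> * norm (d (Suc n)) + \<mu> * norm (d (Suc n)) + \<beta> * norm (d (Suc n)) + L * norm (d (Suc n))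
      + L * norm (d n)) \<longlonglongrightarrow> 1/\<gamma> * 0 + \<mu> * 0 + \<beta> * 0 + L * 0 + L * 0"
      by (intro tendsto_add tendsto_mult_left LIMSEQ_Suc[OF d0] d0)
    then show "(\<lambda>n. 1/\<gamma> * norm (d (Suc n)) + \<mu> * norm (d (Suc n)) + \<beta> * norm (d (Suc n)) + L * norm (d (Suc n))
      + L * norm (d n)) \<longlonglongrightarrow> 0" by simp
  qed
  then show ?thesis by (rule LIMSEQ_imp_Suc)
qed

lemma weak_cluster_point_in_zer:
  assumes "zer M \<noteq> {}" "strict_mono r" "weakly_converges (x \<circ> r) q"
  shows "q \<in> zer M"
proof -
  have "(d \<circ> r) \<longlonglongrightarrow> 0" using LIMSEQ_subseq_LIMSEQ[OF d_tendsto_zero[OF assms(1)] assms(2)] .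
  then have "weakly_converges (\<lambda>k. (x \<circ> r) k - (d \<circ> r) k) q"
    by (rule weakly_converges_diff_null[OF assms(3)])
  then have "weakly_converges (y \<circ> r) q" by (simp add: d_def o_def)
  moreover have "bounded (range (y \<circ> r))" using y_bounded[OF assms(1)] by (rule bounded_subset) auto
  moreover have "(v \<circ> r) \<longlonglongrightarrow> 0" using LIMSEQ_subseq_LIMSEQ[OF v_tendsto_zero[OF assms(1)] assms(2)] .
  ultimately have "0 \<in> M q"
    using v_mem by (intro max_monotone_op_weak_strong_closed[OF M_max_monotone, of "v \<circ> r" "y \<circ> r"]) auto
  then show ?thesis unfolding zer_def by simp
qed

theorem weakly_converges_to_zer:
  assumes "zer M \<noteq> {}"
  shows "\<exists>p\<in>zer M. weakly_converges x p"
  using opial[OF x_bounded[OF assms] dist_sq_convergent weak_cluster_point_in_zer[OF assms]] .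

end

theorem mainTheorem4:
  fixes A1 :: "'a::{real_inner,complete_space} \<Rightarrow> 'a set"
    and A2 B C :: "'a \<Rightarrow> 'a"
    and L \<mu> \<beta> \<gamma> \<epsilon> :: real
    and xm1 ym1 :: 'a
    and x y :: "nat \<Rightarrow> 'a"
  assumes A1: "max_monotone_op A1"
    and A2: "L-lipschitz_on UNIV A2"
    and A12: "max_monotone_op (op_plus A1 (sv A2))"
    and Bmono: "monotone_op (sv B)"
    and Blip: "\<mu>-lipschitz_on UNIV B"
    and beta: "\<beta> > 0"
    and Ccoc: "cocoercive (inverse \<beta>) C"
    and zne: "zer (op_plus (op_plus (op_plus A1 (sv A2)) (sv B)) (sv C)) \<noteq> {}"
    and gam: "\<gamma> > 0" and eps: "\<epsilon> > 0"
    and step: "1 - 2*\<gamma>*L - 2*\<gamma>^2*L*\<mu> - \<gamma>^2*\<mu>^2 - \<gamma>*\<beta>/2 \<ge> \<epsilon>"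
    and yrec: "\<And>k. y k \<in> resolvent \<gamma> A1
        (x k - \<gamma> *\<^sub>R A2 (x k) - \<gamma> *\<^sub>R B (x k) - \<gamma> *\<^sub>R C (x k)
         - \<gamma> *\<^sub>R (A2 (if k = 0 then ym1 else y (k - 1)) - A2 (if k = 0 then xm1 else x (k - 1))))"
    and xrec: "\<And>k. x (Suc k) = y k - \<gamma> *\<^sub>R B (y k) + \<gamma> *\<^sub>R B (x k)"
  shows "\<exists>p \<in> zer (op_plus (op_plus (op_plus A1 (sv A2)) (sv B)) (sv C)). weakly_converges x p"
proof -
  interpret splitting_iteration A1 A2 B C L \<mu> \<beta> \<gamma> \<epsilon> xm1 ym1 x y
    using A2 A12 Bmono Blip beta Ccoc gam eps step yrec xrec by unfold_locales
  show ?thesis using weakly_converges_to_zer[OF zne] .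
qed

end
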